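(* The restriction $W:\mathcal B\to C(\mathcal X)$ is continuous (with the $\mathcal H_c$-norm topology on $\mathcal B$ and the uniform topology on $C(\mathcal X)$). Moreover the graph $\{(b,p):b\in\mathcal B,\ p\in\tilde Pb\}$ is closed in $\mathcal H_c\times C(\mathcal X)$.
   Context: $(\mathcal X,\mathsf d)$ compact metric space; $\varepsilon>0$; $c\in C(\mathcal X\times\mathcal X)$ symmetric, nonnegative, with $k_c:=\exp(-c/\varepsilon)$ a positive definite universal kernel; $\mathcal H_c\subset C(\mathcal X)$ its RKHS and $H_c:\mathcal H_c^*\to\mathcal H_c$ the Riesz isomorphism, given on measures by $H_c[\sigma](y)=\int k_c(x,y)d\sigma(x)$; $H_c^{-1}$ on $H_c[\mathcal M(\mathcal X)]$ returns the measure. $\mathcal B:=H_c[\mathcal M_+(\mathcal X)]\cap\{b\in\mathcal H_c:\|b\|_{\mathcal H_c}=1\}$. $V\in C(\mathcal X)$. For $b\in H_c[\mathcal M(\mathcal X)]$: $Vb$ pointwise product, $V^*b:=H_c[V\,H_c^{-1}[b]]$, $W:=\frac2\varepsilon(V-V^* )$. For $b\in H_c[\mathcal M_+(\mathcal X)]$: $\tilde Pb:=\{p\in C(\mathcal X):p\le0,\ p=0\text{ on }\operatorname{supp}H_c^{-1}[b]\}$. *)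

theory Defs
  imports "HOL-Analysis.Analysis"
begin

text \<open>The compact metric space X is modelled as a type 'a whose UNIV is compact.
Kernels are functions k :: 'a => 'a => real.\<close>

definition kc :: "('a \<Rightarrow> 'a \<Rightarrow> real) \<Rightarrow> real \<Rightarrow> 'a \<Rightarrow> 'a \<Rightarrow> real" where
  "kc c eps = (\<lambda>x y. exp (- c x y / eps))"

definition csupp :: "('a \<Rightarrow> real) \<Rightarrow> 'a set" where
  "csupp a = {x. a x \<noteq> 0}"

definition fin_coeff :: "('a \<Rightarrow> real) \<Rightarrow> bool" where
  "fin_coeff a \<longleftrightarrow> finite (csupp a)"

definition kspan :: "('a \<Rightarrow> 'a \<Rightarrow> real) \<Rightarrow> ('a \<Rightarrow> real) \<Rightarrow> 'a \<Rightarrow> real" where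
  "kspan k a = (\<lambda>y. \<Sum>x\<in>csupp a. a x * k x y)"

definition prenorm2 :: "('a \<Rightarrow> 'a \<Rightarrow> real) \<Rightarrow> ('a \<Rightarrow> real) \<Rightarrow> real" where
  "prenorm2 k a = (\<Sum>x\<in>csupp a. \<Sum>y\<in>csupp a. a x * a y * k x y)"

definition pos_def_kernel :: "('a \<Rightarrow> 'a \<Rightarrow> real) \<Rightarrow> bool" where
  "pos_def_kernel k \<longleftrightarrow> (\<forall>a. fin_coeff a \<longrightarrow> a \<noteq> (\<lambda>_. 0) \<longrightarrow> prenorm2 k a > 0)"

definition universal_kernel :: "('a::topological_space \<Rightarrow> 'a \<Rightarrow> real) \<Rightarrow> bool" where
  "universal_kernel k \<longleftrightarrow>
     (\<forall>f. continuous_on UNIV f \<longrightarrow> (\<forall>e>0. \<exists>a. fin_coeff a \<and> (\<forall>y. \<bar>f y - kspan k a y\<bar> < e)))"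

text \<open>RKHS (Moore-Aronszajn construction): f belongs to the RKHS iff it is the pointwise
limit of a sequence of kernel sections which is Cauchy in the pre-Hilbert norm; the
RKHS norm is the limit of the pre-Hilbert norms.\<close>

definition rkhs_approx :: "('a \<Rightarrow> 'a \<Rightarrow> real) \<Rightarrow> ('a \<Rightarrow> real) \<Rightarrow> (nat \<Rightarrow> 'a \<Rightarrow> real) \<Rightarrow> bool" where
  "rkhs_approx k f a \<longleftrightarrow> (\<forall>n. fin_coeff (a n))
     \<and> (\<forall>e>0. \<exists>N. \<forall>m\<ge>N. \<forall>n\<ge>N. prenorm2 k (\<lambda>x. a m x - a n x) < e)
     \<and> (\<forall>y. (\<lambda>n. kspan k (a n) y) \<longlonglongrightarrow> f y)"

definition rkhs :: "('a \<Rightarrow> 'a \<Rightarrow> real) \<Rightarrow> ('a \<Rightarrow> real) set" where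
  "rkhs k = {f. \<exists>a. rkhs_approx k f a}"

definition rkhs_norm :: "('a \<Rightarrow> 'a \<Rightarrow> real) \<Rightarrow> ('a \<Rightarrow> real) \<Rightarrow> real" where
  "rkhs_norm k f = sqrt (THE L. \<exists>a. rkhs_approx k f a \<and> (\<lambda>n. prenorm2 k (a n)) \<longlonglongrightarrow> L)"

definition pos_meas :: "'a::topological_space measure \<Rightarrow> bool" where
  "pos_meas \<sigma> \<longleftrightarrow> finite_measure \<sigma> \<and> sets \<sigma> = sets borel"

definition Hc :: "('a \<Rightarrow> 'a \<Rightarrow> real) \<Rightarrow> 'a measure \<Rightarrow> 'a \<Rightarrow> real" where
  "Hc k \<sigma> = (\<lambda>y. \<integral>x. k x y \<partial>\<sigma>)"

definition Hc_inv :: "('a::topological_space \<Rightarrow> 'a \<Rightarrow> real) \<Rightarrow> ('a \<Rightarrow> real) \<Rightarrow> 'a measure" where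
  "Hc_inv k b = (THE \<sigma>. pos_meas \<sigma> \<and> b = Hc k \<sigma>)"

definition meas_supp :: "'a::metric_space measure \<Rightarrow> 'a set" where
  "meas_supp \<sigma> = {x. \<forall>r>0. emeasure \<sigma> (ball x r) > 0}"

definition Bset :: "('a::topological_space \<Rightarrow> 'a \<Rightarrow> real) \<Rightarrow> ('a \<Rightarrow> real) set" where
  "Bset k = {b. (\<exists>\<sigma>. pos_meas \<sigma> \<and> b = Hc k \<sigma>) \<and> b \<in> rkhs k \<and> rkhs_norm k b = 1}"

text \<open>V^* b = H_c[V H_c^{-1}[b]] and W = (2/eps)(V - V^*).\<close>

definition Vstar :: "('a::topological_space \<Rightarrow> 'a \<Rightarrow> real) \<Rightarrow> ('a \<Rightarrow> real) \<Rightarrow> ('a \<Rightarrow> real) \<Rightarrow> 'a \<Rightarrow> real" where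
  "Vstar k V b = (\<lambda>y. \<integral>x. V x * k x y \<partial>(Hc_inv k b))"

definition Wop :: "real \<Rightarrow> ('a::topological_space \<Rightarrow> 'a \<Rightarrow> real) \<Rightarrow> ('a \<Rightarrow> real) \<Rightarrow> ('a \<Rightarrow> real) \<Rightarrow> 'a \<Rightarrow> real" where
  "Wop eps k V b = (\<lambda>y. 2 / eps * (V y * b y - Vstar k V b y))"

definition Ptilde :: "('a::metric_space \<Rightarrow> 'a \<Rightarrow> real) \<Rightarrow> ('a \<Rightarrow> real) \<Rightarrow> ('a \<Rightarrow> real) set" where
  "Ptilde k b = {p. continuous_on UNIV p \<and> (\<forall>x. p x \<le> 0) \<and> (\<forall>x\<in>meas_supp (Hc_inv k b). p x = 0)}"

end

theory Submission
  imports Defs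
begin

(* The kernel is bounded below by a positive constant, so the measures sigma with H_c[sigma] in B
   have uniformly bounded mass. If H_c[sigma_n] converges pointwise, universality of the kernel
   (uniform approximation of continuous functions by kernel sections) makes the integrals of every
   continuous function converge; the limit functional is positive and linear, hence by the Riesz
   representation theorem, proved below for compact metric spaces, it is integration against a
   measure mu with H_c[mu] = lim H_c[sigma_n]. Universality also makes H_c injective on measures.

   Continuity of W: convergence in the RKHS norm implies uniform convergence, so the measures behind
   b_n converge weakly to the one behind b, and V^* b_n -> V^* b uniformly by compactness of X.
   Closedness of the graph: the limit b is H_c[mu] for the weak limit mu and has norm 1 by continuity
   of the norm; if p x <> 0 then p_n does not vanish near x for large n, so sigma_n, and hence mu,
   has no mass near x. *)

lemma compact_UNIV_continuous_bounded:
  fixes g :: "'a::metric_space \<Rightarrow> real"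
  assumes "compact (UNIV :: 'a set)" "continuous_on UNIV g"
  obtains B where "\<And>x. \<bar>g x\<bar> \<le> B"
proof -
  have "bounded (g ` UNIV)"
    by (rule compact_imp_bounded[OF compact_continuous_image[OF assms(2,1)]])
  then show ?thesis using that unfolding bounded_iff by auto
qed

lemma measurable_continuous_sets_borel:
  "continuous_on UNIV (g :: 'a::metric_space \<Rightarrow> real) \<Longrightarrow> sets M = sets borel \<Longrightarrow> g \<in> borel_measurable M"
  by (subst measurable_cong_sets[of M borel borel borel]) (auto intro: borel_measurable_continuous_onI)

lemma integrable_continuous_compact_UNIV:
  fixes g :: "'a::metric_space \<Rightarrow> real"
  assumes "compact (UNIV :: 'a set)" "finite_measure M" "sets M = sets borel" "continuous_on UNIV g"
  shows "integrable M g"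
proof -
  obtain B where "\<And>x. \<bar>g x\<bar> \<le> B" using compact_UNIV_continuous_bounded assms(1,4) by blast
  then show ?thesis
    using measurable_continuous_sets_borel[OF assms(4,3)]
    by (intro finite_measure.integrable_const_bound[OF assms(2), of _ B]) auto
qed

lemma convergent_if_approx_convergent:
  fixes s :: "nat \<Rightarrow> real"
  assumes "\<And>e. e > 0 \<Longrightarrow> \<exists>t. convergent t \<and> (\<forall>n. \<bar>s n - t n\<bar> \<le> e)"
  shows "convergent s"
proof -
  have "Cauchy s"
  proof (rule metric_CauchyI)
    fix e :: real assume e: "e > 0"
    obtain t where t: "convergent t" "\<And>n. \<bar>s n - t n\<bar> \<le> e / 4" using assms[of "e/4"] e by auto
    obtain M where M: "\<forall>m\<ge>M. \<forall>n\<ge>M. dist (t m) (t n) < e / 4"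
      using t(1) e unfolding Cauchy_convergent_iff[symmetric] Cauchy_def by (meson divide_pos_pos zero_less_numeral)
    have "dist (s m) (s n) < e" if "m \<ge> M" "n \<ge> M" for m n
    proof -
      have "\<bar>t m - t n\<bar> < e / 4" using M that by (simp add: dist_real_def)
      then show ?thesis using t(2)[of m] t(2)[of n] e unfolding dist_real_def by linarith
    qed
    then show "\<exists>M. \<forall>m\<ge>M. \<forall>n\<ge>M. dist (s m) (s n) < e" by blast
  qed
  then show ?thesis by (simp add: Cauchy_convergent_iff)
qed

lemma uniform_limit_tendsto_compose:
  fixes f :: "nat \<Rightarrow> 'a::metric_space \<Rightarrow> 'b::metric_space"
  assumes f: "uniform_limit UNIV f g sequentially" and g: "continuous_on UNIV g" and x: "x \<longlonglongrightarrow> l"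
  shows "(\<lambda>n. f n (x n)) \<longlonglongrightarrow> g l"
proof (rule tendstoI)
  fix e :: real assume e: "e > 0"
  have gx: "(\<lambda>n. g (x n)) \<longlonglongrightarrow> g l" by (intro continuous_on_tendsto_compose[OF g x]) auto
  have "\<forall>\<^sub>F n in sequentially. \<forall>y\<in>UNIV. dist (f n y) (g y) < e / 2" using uniform_limitD[OF f, of "e/2"] e by simp
  moreover have "\<forall>\<^sub>F n in sequentially. dist (g (x n)) (g l) < e / 2" using tendstoD[OF gx, of "e/2"] e by simp
  ultimately show "\<forall>\<^sub>F n in sequentially. dist (f n (x n)) (g l) < e"
  proof eventually_elim
    case (elim n)
    then have "dist (f n (x n)) (g (x n)) < e / 2" by simp
    then show ?case using elim(2) dist_triangle[of "f n (x n)" "g l" "g (x n)"] by linarith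
  qed
qed

section \<open>Riesz representation on a compact metric space\<close>

lemma separating_function:
  fixes A B :: "'a::metric_space set"
  assumes "closed A" "closed B" "A \<inter> B = {}" "A \<noteq> {}" "B \<noteq> {}"
  obtains h :: "'a \<Rightarrow> real" and OA OB :: "'a set"
  where "continuous_on UNIV h" "\<And>x. 0 \<le> h x \<and> h x \<le> 1"
    "open OA" "A \<subseteq> OA" "\<And>x. x \<in> OA \<Longrightarrow> h x = 0"
    "open OB" "B \<subseteq> OB" "\<And>x. x \<in> OB \<Longrightarrow> h x = 1"
proof -
  have pos: "infdist x A + infdist x B > 0" for x
  proof -
    have "\<not> (infdist x A = 0 \<and> infdist x B = 0)"
      using in_closed_iff_infdist_zero[OF assms(1,4)] in_closed_iff_infdist_zero[OF assms(2,5)] assms(3)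
      by auto
    then show ?thesis using infdist_nonneg[of x A] infdist_nonneg[of x B] by linarith
  qed
  define q where "q x = infdist x A / (infdist x A + infdist x B)" for x
  have qc: "continuous_on UNIV q"
    unfolding q_def by (intro continuous_intros) (metis pos less_irrefl)
  define h where "h x = min 1 (max 0 (3 * q x - 1))" for x
  have "q x = 0" if "x \<in> A" for x using that unfolding q_def by simp
  moreover have "q x = 1" if "x \<in> B" for x using that pos[of x] unfolding q_def by simp
  moreover have "open {x. q x < 1/3}" "open {x. q x > 2/3}"
    by (auto intro!: open_Collect_less qc continuous_intros)
  ultimately show ?thesis
    by (intro that[of h "{x. q x < 1/3}" "{x. q x > 2/3}"])
      (auto simp: h_def intro!: continuous_intros qc)
qed

text \<open>Rudin's relation \<open>f \<prec> U\<close>; compactness of the support is automatic in a compact space.\<close>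

definition subordinate :: "('a::metric_space \<Rightarrow> real) \<Rightarrow> 'a set \<Rightarrow> bool" where
  "subordinate f U \<longleftrightarrow> continuous_on UNIV f \<and> (\<forall>x. 0 \<le> f x \<and> f x \<le> 1) \<and> closure {x. f x \<noteq> 0} \<subseteq> U"

lemma subordinate_zero: "subordinate (\<lambda>x. 0) U"
  unfolding subordinate_def by auto

lemma subordinate_mono: "subordinate f U \<Longrightarrow> U \<subseteq> V \<Longrightarrow> subordinate f V"
  unfolding subordinate_def by auto

lemma subordinate_mult_vanishing:
  assumes f: "subordinate f W" and hc: "continuous_on UNIV h" and h01: "\<And>x. 0 \<le> h x \<and> h x \<le> 1"
    and Z: "open Z" "\<And>x. x \<in> Z \<Longrightarrow> h x = 0" and sub: "closure {x. f x \<noteq> 0} - Z \<subseteq> U"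
  shows "subordinate (\<lambda>x. f x * h x) U"
proof -
  have fc: "continuous_on UNIV f" and f01: "\<And>x. 0 \<le> f x \<and> f x \<le> 1"
    using f unfolding subordinate_def by auto
  have "closure {x. f x * h x \<noteq> 0} \<subseteq> closure {x. f x \<noteq> 0} - Z"
  proof (rule closure_minimal)
    show "{x. f x * h x \<noteq> 0} \<subseteq> closure {x. f x \<noteq> 0} - Z"
      using Z(2) closure_subset[of "{x. f x \<noteq> 0}"] by auto
    show "closed (closure {x. f x \<noteq> 0} - Z)" using Z(1) by (intro closed_Diff) auto
  qed
  moreover have "0 \<le> f x * h x \<and> f x * h x \<le> 1" for x
    using f01[of x] h01[of x] by (simp add: mult_le_one)
  ultimately show ?thesis
    unfolding subordinate_def using sub by (auto intro!: continuous_intros fc hc)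
qed

lemma subordinate_Un_split:
  assumes f: "subordinate f (U \<union> V)" and "open U" "open V"
  obtains g h where "subordinate g U" "subordinate h V" "\<And>x. f x = g x + h x"
proof -
  define K where "K = closure {x. f x \<noteq> 0}"
  have KUV: "K \<subseteq> U \<union> V" using f unfolding subordinate_def K_def by auto
  consider "K - U = {}" | "K - V = {}" | "K - U \<noteq> {}" "K - V \<noteq> {}" by blast
  then show ?thesis
  proof cases
    case 1
    then have "subordinate f U" using f unfolding subordinate_def K_def by auto
    then show ?thesis using that[of f "\<lambda>_. 0"] subordinate_zero by auto
  next
    case 2
    then have "subordinate f V" using f unfolding subordinate_def K_def by auto
    then show ?thesis using that[of "\<lambda>_. 0" f] subordinate_zero by auto
  next
    case 3
    have cl: "closed (K - U)" "closed (K - V)" using assms(2,3) by (auto simp: K_def intro: closed_Diff)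
    have dj: "(K - U) \<inter> (K - V) = {}" using KUV by blast
    obtain h :: "'a \<Rightarrow> real" and OA OB where hc: "continuous_on UNIV h" and h01: "\<And>x. 0 \<le> h x \<and> h x \<le> 1"
      and OA: "open OA" "K - U \<subseteq> OA" "\<And>x. x \<in> OA \<Longrightarrow> h x = 0"
      and OB: "open OB" "K - V \<subseteq> OB" "\<And>x. x \<in> OB \<Longrightarrow> h x = 1"
      using separating_function[OF cl dj 3] by blast
    have "subordinate (\<lambda>x. f x * h x) U"
      by (rule subordinate_mult_vanishing[OF f hc h01 OA(1,3)]) (use OA(2) in \<open>auto simp: K_def\<close>)
    moreover have "subordinate (\<lambda>x. f x * (1 - h x)) V"
      by (rule subordinate_mult_vanishing[OF f _ _ OB(1)])
        (use OB(2,3) h01 in \<open>auto intro!: continuous_intros hc simp: K_def\<close>)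
    ultimately show ?thesis by (rule that) (simp add: algebra_simps)
  qed
qed

lemma subordinate_add:
  assumes f: "subordinate f U" and g: "subordinate g (V - closure {x. f x \<noteq> 0})" and "U \<subseteq> V"
  shows "subordinate (\<lambda>x. f x + g x) V"
  unfolding subordinate_def
proof (intro conjI allI)
  have fc: "continuous_on UNIV f" and f01: "\<And>x. 0 \<le> f x \<and> f x \<le> 1" and fs: "closure {x. f x \<noteq> 0} \<subseteq> U"
    using f unfolding subordinate_def by auto
  have gc: "continuous_on UNIV g" and g01: "\<And>x. 0 \<le> g x \<and> g x \<le> 1"
    and gs: "closure {x. g x \<noteq> 0} \<subseteq> V - closure {x. f x \<noteq> 0}"
    using g unfolding subordinate_def by auto
  show "continuous_on UNIV (\<lambda>x. f x + g x)" by (intro continuous_intros fc gc)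
  have disj: "f x = 0 \<or> g x = 0" for x
    using gs closure_subset[of "{x. g x \<noteq> 0}"] closure_subset[of "{x. f x \<noteq> 0}"] by blast
  show "0 \<le> f x + g x" "f x + g x \<le> 1" for x using f01[of x] g01[of x] disj[of x] by auto
  have "closure {x. f x + g x \<noteq> 0} \<subseteq> closure ({x. f x \<noteq> 0} \<union> {x. g x \<noteq> 0})"
    by (rule closure_mono) auto
  also have "\<dots> \<subseteq> V" using fs gs \<open>U \<subseteq> V\<close> by (auto simp: closure_Un)
  finally show "closure {x. f x + g x \<noteq> 0} \<subseteq> V" .
qed

lemma subordinate_finite_subcover:
  fixes U :: "nat \<Rightarrow> 'a::metric_space set"
  assumes "compact (UNIV :: 'a set)" "\<And>i. open (U i)" "subordinate f (\<Union>i. U i)"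
  obtains n where "subordinate f (\<Union>i<n. U i)"
proof -
  define K where "K = closure {x. f x \<noteq> 0}"
  have cK: "compact K" unfolding K_def using compact_Int_closed[OF assms(1) closed_closure] by simp
  have KU: "K \<subseteq> (\<Union>i. U i)" using assms(3) unfolding subordinate_def K_def by auto
  obtain C where C: "finite C" "K \<subseteq> (\<Union>i\<in>C. U i)"
    by (rule compactE_image[OF cK _ KU]) (auto intro: assms(2))
  obtain n where "C \<subseteq> {..<n}" using finite_nat_bounded[OF C(1)] by blast
  then have "K \<subseteq> (\<Union>i<n. U i)" using C(2) by blast
  then show ?thesis using that assms(3) unfolding subordinate_def K_def by blast
qed

lemma sum_lessThan_shift2:
  fixes b :: "nat \<Rightarrow> 'a::ab_group_add"
  shows "(\<Sum>j<N. b j) = (\<Sum>j<N. b (Suc (Suc j))) + b 0 + b 1 - b N - b (Suc N)"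
  by (induction N) (simp_all add: algebra_simps)

lemma sum_truncated_layers:
  fixes h t :: real assumes "h > 0" "0 \<le> t"
  shows "(\<Sum>j<n. min (max (t - real j * h) 0) h) = min t (real n * h)"
proof (induction n)
  case (Suc n)
  have "min t (real n * h) + min (max (t - real n * h) 0) h = min t (real (Suc n) * h)"
    using assms by (auto simp: min_def max_def algebra_simps)
  then show ?case using Suc by simp
qed (use assms in simp)

locale positive_functional =
  fixes L :: "('a::metric_space \<Rightarrow> real) \<Rightarrow> real"
  assumes compact_UNIV: "compact (UNIV :: 'a set)"
    and L_add: "\<And>f g. continuous_on UNIV f \<Longrightarrow> continuous_on UNIV g \<Longrightarrow> L (\<lambda>x. f x + g x) = L f + L g"
    and L_scale: "\<And>f c. continuous_on UNIV f \<Longrightarrow> L (\<lambda>x. c * f x) = c * L f"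
    and L_nonneg: "\<And>f. continuous_on UNIV f \<Longrightarrow> (\<And>x. f x \<ge> 0) \<Longrightarrow> L f \<ge> 0"
begin

lemma L_diff:
  assumes f: "continuous_on UNIV f" and g: "continuous_on UNIV g"
  shows "L (\<lambda>x. f x - g x) = L f - L g"
proof -
  have "L (\<lambda>x. f x - g x) = L (\<lambda>x. f x + (-1) * g x)" by simp
  also have "\<dots> = L f + L (\<lambda>x. (-1) * g x)" by (rule L_add[OF f]) (auto intro: continuous_intros g)
  also have "\<dots> = L f - L g" using L_scale[OF g, of "-1"] by simp
  finally show ?thesis .
qed

lemma L_mono: "continuous_on UNIV f \<Longrightarrow> continuous_on UNIV g \<Longrightarrow> (\<And>x. f x \<le> g x) \<Longrightarrow> L f \<le> L g"
  using L_nonneg[of "\<lambda>x. g x - f x"] L_diff[of g f] by (auto intro: continuous_intros)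

lemma L_zero: "L (\<lambda>x. 0) = 0"
  using L_scale[of "\<lambda>x. 0" 0] by simp

lemma L_sum:
  "finite S \<Longrightarrow> (\<And>j. j \<in> S \<Longrightarrow> continuous_on UNIV (f j)) \<Longrightarrow> L (\<lambda>x. \<Sum>j\<in>S. f j x) = (\<Sum>j\<in>S. L (f j))"
proof (induction S rule: finite_induct)
  case (insert a S)
  then have "L (\<lambda>x. f a x + (\<Sum>j\<in>S. f j x)) = L (f a) + L (\<lambda>x. \<Sum>j\<in>S. f j x)"
    by (intro L_add) (auto intro!: continuous_on_sum)
  then show ?case using insert by simp
qed (simp add: L_zero)

lemma L_subordinate_bounds: "subordinate f U \<Longrightarrow> 0 \<le> L f \<and> L f \<le> L (\<lambda>_. 1)"
  unfolding subordinate_def using L_nonneg[of f] L_mono[of f "\<lambda>_. 1"] by auto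

definition open_content :: "'a set \<Rightarrow> real" where
  "open_content U = Sup {L f | f. subordinate f U}"

lemma L_le_open_content: "subordinate f U \<Longrightarrow> L f \<le> open_content U"
  unfolding open_content_def
  by (rule cSup_upper) (auto intro: bdd_aboveI[where M = "L (\<lambda>_. 1)"] dest: L_subordinate_bounds)

lemma open_content_le: "(\<And>f. subordinate f U \<Longrightarrow> L f \<le> c) \<Longrightarrow> open_content U \<le> c"
  unfolding open_content_def by (rule cSup_least) (auto intro: subordinate_zero)

lemma open_content_approx:
  assumes "e > 0"
  obtains f where "subordinate f U" "open_content U - e < L f"
proof (rule ccontr)
  assume "\<not> thesis"
  then have "open_content U \<le> open_content U - e"
    using that by (intro open_content_le) (meson not_less)
  then show False using assms by simp
qed

lemma open_content_nonneg: "0 \<le> open_content U"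
  using L_le_open_content[OF subordinate_zero] L_zero by simp

lemma open_content_le_total: "open_content U \<le> L (\<lambda>_. 1)"
  by (rule open_content_le) (simp add: L_subordinate_bounds)

lemma open_content_mono: "U \<subseteq> V \<Longrightarrow> open_content U \<le> open_content V"
  by (rule open_content_le) (auto intro: L_le_open_content subordinate_mono)

lemma open_content_empty: "open_content {} = 0"
proof -
  have "open_content {} \<le> 0"
  proof (rule open_content_le)
    fix f :: "'a \<Rightarrow> real" assume "subordinate f {}"
    then have "f = (\<lambda>x. 0)" unfolding subordinate_def using closure_subset by fastforce
    then show "L f \<le> 0" by (simp add: L_zero)
  qed
  then show ?thesis using open_content_nonneg[of "{}"] by simp
qed

lemma open_content_UNIV: "open_content UNIV = L (\<lambda>_. 1)"
  using L_le_open_content[of "\<lambda>_. 1" UNIV] open_content_le_total[of UNIV]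
  unfolding subordinate_def by auto

lemma open_content_Un_le:
  assumes "open U" "open V"
  shows "open_content (U \<union> V) \<le> open_content U + open_content V"
proof (rule open_content_le)
  fix f assume "subordinate f (U \<union> V)"
  then obtain g h where g: "subordinate g U" and h: "subordinate h V" and fgh: "\<And>x. f x = g x + h x"
    using subordinate_Un_split assms by blast
  have "L f = L (\<lambda>x. g x + h x)" by (rule arg_cong[where f = L]) (simp add: fgh fun_eq_iff)
  also have "\<dots> = L g + L h" using g h unfolding subordinate_def by (intro L_add) auto
  finally show "L f \<le> open_content U + open_content V"
    using L_le_open_content[OF g] L_le_open_content[OF h] by simp
qed

lemma open_content_UN_lessThan_le:
  assumes "\<And>i. open (U i)"
  shows "open_content (\<Union>i<(n::nat). U i) \<le> (\<Sum>i<n. open_content (U i))"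
proof (induction n)
  case (Suc n)
  have "(\<Union>i<Suc n. U i) = (\<Union>i<n. U i) \<union> U n" by (auto simp: lessThan_Suc)
  moreover have "open (\<Union>i<n. U i)" using assms by auto
  ultimately have "open_content (\<Union>i<Suc n. U i) \<le> open_content (\<Union>i<n. U i) + open_content (U n)"
    using open_content_Un_le assms by simp
  then show ?case using Suc by simp
qed (simp add: open_content_empty)

lemma open_content_UN_le:
  assumes "\<And>i. open (U i)"
  shows "ennreal (open_content (\<Union>i. U i)) \<le> (\<Sum>i. ennreal (open_content (U i)))"
proof (cases "(\<Sum>i. ennreal (open_content (U i))) = top")
  case False
  have s: "summable (\<lambda>i. open_content (U i))"
    using summable_suminf_not_top[OF open_content_nonneg False] .
  have "open_content (\<Union>i. U i) \<le> (\<Sum>i. open_content (U i))"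
  proof (rule open_content_le)
    fix f assume "subordinate f (\<Union>i. U i)"
    then obtain n where "subordinate f (\<Union>i<n. U i)"
      using subordinate_finite_subcover[where U = U, OF compact_UNIV assms] by blast
    then have "L f \<le> open_content (\<Union>i<n. U i)" by (rule L_le_open_content)
    also have "\<dots> \<le> (\<Sum>i<n. open_content (U i))" by (rule open_content_UN_lessThan_le[OF assms])
    also have "\<dots> \<le> (\<Sum>i. open_content (U i))" by (rule sum_le_suminf[OF s]) (auto simp: open_content_nonneg)
    finally show "L f \<le> (\<Sum>i. open_content (U i))" .
  qed
  then show ?thesis using suminf_ennreal[OF open_content_nonneg False] by (simp add: ennreal_leI)
qed simp

definition outer_content :: "'a set \<Rightarrow> real" where
  "outer_content E = Inf {open_content U | U. open U \<and> E \<subseteq> U}"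

lemma outer_content_le: "open U \<Longrightarrow> E \<subseteq> U \<Longrightarrow> outer_content E \<le> open_content U"
  unfolding outer_content_def by (rule cInf_lower) (auto intro: bdd_belowI[where m = 0] open_content_nonneg)

lemma outer_content_ge: "(\<And>U. open U \<Longrightarrow> E \<subseteq> U \<Longrightarrow> c \<le> open_content U) \<Longrightarrow> c \<le> outer_content E"
  unfolding outer_content_def by (rule cInf_greatest) auto

lemma outer_content_approx:
  assumes "e > 0"
  obtains U where "open U" "E \<subseteq> U" "open_content U < outer_content E + e"
proof (rule ccontr)
  assume "\<not> thesis"
  then have "outer_content E + e \<le> outer_content E"
    using that by (intro outer_content_ge) (meson not_less)
  then show False using assms by simp
qed

lemma outer_content_nonneg: "0 \<le> outer_content E"
  by (rule outer_content_ge) (simp add: open_content_nonneg)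

lemma outer_content_open: "open U \<Longrightarrow> outer_content U = open_content U"
  using outer_content_le[of U U] outer_content_ge[of U "open_content U"] open_content_mono
  by (auto intro: antisym)

lemma outer_content_mono: "E \<subseteq> F \<Longrightarrow> outer_content E \<le> outer_content F"
  by (rule outer_content_ge) (auto intro: outer_content_le)

lemma outer_content_empty: "outer_content {} = 0"
  using outer_content_open[of "{}"] open_content_empty by simp

lemma outer_content_UN_le: "ennreal (outer_content (\<Union>i. A i)) \<le> (\<Sum>i. ennreal (outer_content (A i)))"
proof (rule ennreal_le_epsilon)
  fix e :: real assume e: "0 < e" "(\<Sum>i. ennreal (outer_content (A i))) < top"
  have "\<exists>U. open U \<and> A n \<subseteq> U \<and> open_content U < outer_content (A n) + e * (1/2)^Suc n" for n
    using outer_content_approx[of "e * (1/2)^Suc n" "A n"] e by auto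
  then obtain U where U: "\<And>n. open (U n)" "\<And>n. A n \<subseteq> U n"
    "\<And>n. open_content (U n) < outer_content (A n) + e * (1/2)^Suc n"
    by metis
  have "ennreal (outer_content (\<Union>i. A i)) \<le> ennreal (open_content (\<Union>i. U i))"
    using outer_content_le[of "\<Union>i. U i" "\<Union>i. A i"] U by (auto intro!: ennreal_leI open_UN)
  also have "\<dots> \<le> (\<Sum>i. ennreal (open_content (U i)))" by (rule open_content_UN_le[OF U(1)])
  also have "\<dots> \<le> (\<Sum>n. ennreal (outer_content (A n)) + ennreal e * ennreal ((1/2) ^ Suc n))"
  proof (rule suminf_le)
    fix n
    have "ennreal (open_content (U n)) \<le> ennreal (outer_content (A n) + e * (1/2)^Suc n)"
      using U(3)[of n] by (intro ennreal_leI) simp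
    also have "\<dots> = ennreal (outer_content (A n)) + ennreal e * ennreal ((1/2) ^ Suc n)"
      using e outer_content_nonneg[of "A n"] by (subst ennreal_mult[symmetric]) (auto intro!: ennreal_plus)
    finally show "ennreal (open_content (U n)) \<le> ennreal (outer_content (A n)) + ennreal e * ennreal ((1/2) ^ Suc n)" .
  qed auto
  also have "\<dots> = (\<Sum>n. ennreal (outer_content (A n))) + (\<Sum>n. ennreal e * ennreal ((1/2) ^ Suc n))"
    by (subst suminf_add[symmetric]) auto
  also have "\<dots> = (\<Sum>n. ennreal (outer_content (A n))) + e"
    unfolding ennreal_suminf_cmult
    by (subst suminf_ennreal_eq[OF zero_le_power power_half_series]) auto
  finally show "ennreal (outer_content (\<Union>i. A i)) \<le> (\<Sum>i. ennreal (outer_content (A i))) + ennreal e" .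
qed

lemma outer_content_Un_le: "outer_content (A \<union> B) \<le> outer_content A + outer_content B"
proof (rule field_le_epsilon)
  fix e :: real assume e: "0 < e"
  obtain U where U: "open U" "A \<subseteq> U" "open_content U < outer_content A + e/2"
    using outer_content_approx[of "e/2" A] e by auto
  obtain V where V: "open V" "B \<subseteq> V" "open_content V < outer_content B + e/2"
    using outer_content_approx[of "e/2" B] e by auto
  have "outer_content (A \<union> B) \<le> open_content (U \<union> V)" using U V by (intro outer_content_le) auto
  also have "\<dots> \<le> open_content U + open_content V" using U V by (intro open_content_Un_le) auto
  finally show "outer_content (A \<union> B) \<le> outer_content A + outer_content B + e" using U V by simp
qed

text \<open>Approximate \<open>E\<close> by an open \<open>V\<close>, fill \<open>V \<inter> U\<close> from inside by \<open>f\<close> and the rest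
  \<open>V - supp f\<close> by \<open>g\<close>; then \<open>f + g \<prec> V\<close>.\<close>

lemma outer_content_split_open:
  assumes oU: "open U"
  shows "outer_content (E \<inter> U) + outer_content (E - U) \<le> outer_content E"
proof (rule field_le_epsilon)
  fix e :: real assume "0 < e"
  define d where "d = e / 3"
  have d: "d > 0" using \<open>0 < e\<close> unfolding d_def by simp
  obtain V where V: "open V" "E \<subseteq> V" "open_content V < outer_content E + d"
    using outer_content_approx[OF d] by blast
  obtain f where f: "subordinate f (V \<inter> U)" "open_content (V \<inter> U) - d < L f"
    using open_content_approx[OF d] by blast
  define K where "K = closure {x. f x \<noteq> 0}"
  have KVU: "K \<subseteq> V \<inter> U" using f(1) unfolding subordinate_def K_def by auto
  have oW: "open (V - K)" using V(1) by (auto simp: K_def intro: open_Diff)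
  obtain g where g: "subordinate g (V - K)" "open_content (V - K) - d < L g"
    using open_content_approx[OF d] by blast
  have fg: "continuous_on UNIV f" "continuous_on UNIV g" using f(1) g(1) unfolding subordinate_def by auto
  have "L f + L g = L (\<lambda>x. f x + g x)" by (rule L_add[OF fg, symmetric])
  also have "\<dots> \<le> open_content V"
    by (rule L_le_open_content[OF subordinate_add[OF f(1) g(1)[unfolded K_def] Int_lower1]])
  finally have "L f + L g \<le> open_content V" .
  moreover have "outer_content (E \<inter> U) \<le> open_content (V \<inter> U)" using V oU by (intro outer_content_le) auto
  moreover have "outer_content (E - U) \<le> open_content (V - K)" using V KVU oW by (intro outer_content_le) auto
  ultimately show "outer_content (E \<inter> U) + outer_content (E - U) \<le> outer_content E + e"
    using f(2) g(2) V(3) unfolding d_def by linarith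
qed

lemma outer_measure_space_outer_content:
  "outer_measure_space (Pow UNIV) (\<lambda>E. ennreal (outer_content E))"
  unfolding outer_measure_space_def positive_def increasing_def countably_subadditive_def
  using outer_content_UN_le by (auto simp: outer_content_empty intro: ennreal_leI outer_content_mono)

lemma open_in_lambda_system:
  assumes "open U"
  shows "U \<in> lambda_system UNIV (Pow UNIV) (\<lambda>E. ennreal (outer_content E))"
  unfolding algebra.lambda_system_eq[OF algebra_Pow]
proof (intro CollectI conjI ballI)
  fix E :: "'a set"
  have "outer_content E \<le> outer_content (E \<inter> U) + outer_content (E - U)"
    using outer_content_Un_le[of "E \<inter> U" "E - U"] by (simp add: Int_Diff_Un)
  then show "ennreal (outer_content (E \<inter> U)) + ennreal (outer_content (E - U)) = ennreal (outer_content E)"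
    using outer_content_split_open[OF assms, of E] outer_content_nonneg
    by (simp add: ennreal_plus[symmetric] del: ennreal_plus)
qed simp

definition riesz_measure :: "'a measure" where
  "riesz_measure = measure_of UNIV (sets borel) (\<lambda>E. ennreal (outer_content E))"

lemma
  shows sets_riesz_measure: "sets riesz_measure = sets borel"
    and space_riesz_measure: "space riesz_measure = UNIV"
    and emeasure_riesz_measure: "\<And>A. A \<in> sets borel \<Longrightarrow> emeasure riesz_measure A = ennreal (outer_content A)"
proof -
  let ?\<mu> = "\<lambda>E. ennreal (outer_content E)"
  have ms: "measure_space UNIV (lambda_system UNIV (Pow UNIV) ?\<mu>) ?\<mu>"
    by (rule sigma_algebra.caratheodory_lemma[OF sigma_algebra_Pow outer_measure_space_outer_content])
  then have sa: "sigma_algebra UNIV (lambda_system UNIV (Pow UNIV) ?\<mu>)" by (simp add: measure_space_def)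
  have "sigma_sets UNIV {S. open S} \<subseteq> lambda_system UNIV (Pow UNIV) ?\<mu>"
    using open_in_lambda_system by (intro sigma_algebra.sigma_sets_subset[OF sa]) auto
  then have sub: "sets borel \<subseteq> lambda_system UNIV (Pow UNIV) ?\<mu>" by (simp add: sets_borel)
  have sab: "sigma_algebra UNIV (sets borel)" using sets.sigma_algebra_axioms[of borel] by simp
  have msb: "measure_space UNIV (sets borel) ?\<mu>" by (rule measure_down[OF ms sab sub])
  show "sets riesz_measure = sets borel"
    unfolding riesz_measure_def using sigma_algebra.sigma_sets_eq[OF sab] by (simp add: sets_measure_of_conv)
  show "space riesz_measure = UNIV" unfolding riesz_measure_def by (simp add: space_measure_of_conv)
  fix A :: "'a set" assume "A \<in> sets borel"
  then show "emeasure riesz_measure A = ?\<mu> A" unfolding riesz_measure_def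
    using msb by (intro emeasure_measure_of_sigma[OF sab]) (auto simp: measure_space_def)
qed

lemma finite_measure_riesz_measure: "finite_measure riesz_measure"
  by (rule finite_measureI) (simp add: emeasure_riesz_measure space_riesz_measure)

lemma measure_riesz_measure_open: "open U \<Longrightarrow> measure riesz_measure U = open_content U"
  using emeasure_riesz_measure[of U] by (simp add: measure_def outer_content_open open_content_nonneg)

lemma integrable_riesz_measure: "continuous_on UNIV (g :: 'a \<Rightarrow> real) \<Longrightarrow> integrable riesz_measure g"
  by (rule integrable_continuous_compact_UNIV[OF compact_UNIV finite_measure_riesz_measure sets_riesz_measure])

lemma L_layer_le:
  assumes gc: "continuous_on UNIV g" and h: "h > 0"
  shows "L (\<lambda>x. min (max (g x - t) 0) h) \<le> h * open_content {x. g x > t - h}"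
proof -
  define f where "f = (\<lambda>x. (1/h) * min (max (g x - t) 0) h)"
  have "subordinate f {x. g x > t - h}"
    unfolding subordinate_def
  proof (intro conjI allI)
    show "continuous_on UNIV f" unfolding f_def by (intro continuous_intros gc)
    fix x show "0 \<le> f x" "f x \<le> 1" unfolding f_def using h by (auto simp: field_simps)
  next
    have "closure {x. f x \<noteq> 0} \<subseteq> {x. g x \<ge> t}"
    proof (rule closure_minimal)
      show "{x. f x \<noteq> 0} \<subseteq> {x. g x \<ge> t}" unfolding f_def using h by (auto simp: min_def max_def)
      show "closed {x. g x \<ge> t}" by (rule closed_Collect_le) (auto intro: gc continuous_intros)
    qed
    also have "\<dots> \<subseteq> {x. g x > t - h}" using h by auto
    finally show "closure {x. f x \<noteq> 0} \<subseteq> {x. g x > t - h}" .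
  qed
  then have "L f \<le> open_content {x. g x > t - h}" by (rule L_le_open_content)
  moreover have "L f = (1/h) * L (\<lambda>x. min (max (g x - t) 0) h)"
    unfolding f_def by (rule L_scale) (intro continuous_intros gc)
  ultimately show ?thesis using h by (simp add: field_simps)
qed

lemma layer_le_integral:
  assumes gc: "continuous_on UNIV g" and h: "h > 0"
  shows "h * open_content {x. g x > t + h} \<le> integral\<^sup>L riesz_measure (\<lambda>x. min (max (g x - t) 0) h)"
proof -
  have oa: "open {x. g x > t + h}" by (rule open_Collect_less) (auto intro: gc continuous_intros)
  have "h * open_content {x. g x > t + h} = integral\<^sup>L riesz_measure (\<lambda>x. h * indicator {x. g x > t + h} x)"
    using measure_riesz_measure_open[OF oa] oa by (simp add: sets_riesz_measure emeasure_riesz_measure)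
  also have "\<dots> \<le> integral\<^sup>L riesz_measure (\<lambda>x. min (max (g x - t) 0) h)"
  proof (rule integral_mono)
    show "integrable riesz_measure (\<lambda>x. min (max (g x - t) 0) h)"
      by (intro integrable_riesz_measure continuous_intros gc)
    show "integrable riesz_measure (\<lambda>x. h * indicator {x. g x > t + h} x)"
      using oa by (intro integrable_mult_right integrable_real_indicator)
        (auto simp: sets_riesz_measure less_top[symmetric]
          finite_measure.emeasure_finite[OF finite_measure_riesz_measure])
    fix x show "h * indicator {x. g x > t + h} x \<le> min (max (g x - t) 0) h"
      using h by (auto simp: indicator_def min_def max_def)
  qed
  finally show ?thesis .
qed

text \<open>Slice \<open>g \<ge> 0\<close> into layers of height \<open>h\<close>; each layer is squeezed between consecutive
  values of the content of the superlevel sets, and the telescoping error is at most \<open>2 h L(1)\<close>.\<close>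

lemma L_le_integral_nonneg:
  assumes gc: "continuous_on UNIV g" and g0: "\<And>x. 0 \<le> g x"
  shows "L g \<le> integral\<^sup>L riesz_measure g"
proof (rule field_le_epsilon)
  fix e :: real assume e: "e > 0"
  define M where "M = L (\<lambda>_. 1)"
  have M0: "M \<ge> 0" unfolding M_def by (rule L_nonneg) auto
  define h where "h = e / (2 * M + 1)"
  have h: "h > 0" "2 * h * M \<le> e" unfolding h_def using e M0 by (auto simp: field_simps)
  obtain B where B: "\<And>x. \<bar>g x\<bar> \<le> B" using compact_UNIV_continuous_bounded[OF compact_UNIV gc] by blast
  obtain N :: nat where "B / h \<le> real N" using real_arch_simple by blast
  then have gN: "g x \<le> real N * h" for x using B[of x] h by (simp add: field_simps)
  define layer where "layer = (\<lambda>(j::nat) x. min (max (g x - real j * h) 0) h)"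
  have layer_c: "continuous_on UNIV (layer j)" for j unfolding layer_def by (intro continuous_intros gc)
  have g_sum: "g = (\<lambda>x. \<Sum>j<N. layer j x)"
    using sum_truncated_layers[OF h(1) g0] gN by (auto simp: layer_def min_absorb1)
  define c where "c j = open_content {x. g x > real j * h - h}" for j :: nat
  have c_bounds: "0 \<le> c j \<and> c j \<le> M" for j
    unfolding c_def M_def using open_content_nonneg open_content_le_total by auto
  have "L g = (\<Sum>j<N. L (layer j))"
    by (subst g_sum) (rule L_sum[OF _ layer_c], simp)
  also have "\<dots> \<le> (\<Sum>j<N. h * c j)"
    by (intro sum_mono) (use L_layer_le[OF gc h(1)] in \<open>simp add: layer_def c_def\<close>)
  also have "\<dots> = (\<Sum>j<N. h * c (Suc (Suc j))) + h * (c 0 + c 1 - c N - c (Suc N))"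
    using sum_lessThan_shift2[of "\<lambda>j. h * c j" N] by (simp add: algebra_simps)
  also have "\<dots> \<le> integral\<^sup>L riesz_measure g + e"
  proof -
    have "h * c (Suc (Suc j)) \<le> integral\<^sup>L riesz_measure (layer j)" for j
      using layer_le_integral[OF gc h(1), of "real j * h"] unfolding c_def layer_def
      by (simp add: algebra_simps)
    then have "(\<Sum>j<N. h * c (Suc (Suc j))) \<le> (\<Sum>j<N. integral\<^sup>L riesz_measure (layer j))"
      by (rule sum_mono)
    also have "\<dots> = integral\<^sup>L riesz_measure g"
      by (simp add: g_sum integral_sum integrable_riesz_measure[OF layer_c])
    finally have "(\<Sum>j<N. h * c (Suc (Suc j))) \<le> integral\<^sup>L riesz_measure g" .
    moreover have "h * (c 0 + c 1 - c N - c (Suc N)) \<le> h * (2 * M)"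
      using c_bounds[of 0] c_bounds[of 1] c_bounds[of N] c_bounds[of "Suc N"] h(1)
      by (intro mult_left_mono) auto
    ultimately show ?thesis using h(2) by linarith
  qed
  finally show "L g \<le> integral\<^sup>L riesz_measure g + e" .
qed

lemma L_le_integral:
  assumes gc: "continuous_on UNIV g"
  shows "L g \<le> integral\<^sup>L riesz_measure g"
proof -
  obtain B where B: "\<And>x. \<bar>g x\<bar> \<le> B" using compact_UNIV_continuous_bounded[OF compact_UNIV gc] by blast
  have "L (\<lambda>x. g x + B * 1) \<le> integral\<^sup>L riesz_measure (\<lambda>x. g x + B * 1)"
    using B by (intro L_le_integral_nonneg continuous_intros gc) (smt (verit))
  moreover have "L (\<lambda>x. g x + B * 1) = L g + B * L (\<lambda>_. 1)"
    using L_add[OF gc, of "\<lambda>x. B * 1"] L_scale[of "\<lambda>_. 1" B] by (simp add: continuous_intros)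
  moreover have "integral\<^sup>L riesz_measure (\<lambda>x. g x + B * 1) = integral\<^sup>L riesz_measure g + B * L (\<lambda>_. 1)"
    using measure_riesz_measure_open[of UNIV] open_content_UNIV
    by (simp add: integrable_riesz_measure[OF gc] finite_measure.integrable_const[OF finite_measure_riesz_measure]
        space_riesz_measure)
  ultimately show ?thesis by simp
qed

lemma integral_riesz_measure:
  assumes gc: "continuous_on UNIV g"
  shows "integral\<^sup>L riesz_measure g = L g"
proof -
  have "L (\<lambda>x. (-1) * g x) \<le> integral\<^sup>L riesz_measure (\<lambda>x. (-1) * g x)"
    by (intro L_le_integral continuous_intros gc)
  then have "integral\<^sup>L riesz_measure g \<le> L g" using L_scale[OF gc, of "-1"] by simp
  then show ?thesis using L_le_integral[OF gc] by simp
qed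

end

theorem riesz_representation_compact:
  fixes L :: "('a::metric_space \<Rightarrow> real) \<Rightarrow> real"
  assumes "compact (UNIV :: 'a set)"
    and "\<And>f g. continuous_on UNIV f \<Longrightarrow> continuous_on UNIV g \<Longrightarrow> L (\<lambda>x. f x + g x) = L f + L g"
    and "\<And>f c. continuous_on UNIV f \<Longrightarrow> L (\<lambda>x. c * f x) = c * L f"
    and "\<And>f. continuous_on UNIV f \<Longrightarrow> (\<And>x. f x \<ge> 0) \<Longrightarrow> L f \<ge> 0"
  obtains M where "finite_measure M" "sets M = sets borel"
    "\<And>g. continuous_on UNIV g \<Longrightarrow> integral\<^sup>L M g = L g"
proof -
  interpret positive_functional L using assms by unfold_locales auto
  show ?thesis by (rule that[OF finite_measure_riesz_measure sets_riesz_measure integral_riesz_measure])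
qed

lemma pos_measD:
  assumes "pos_meas \<sigma>"
  shows "finite_measure \<sigma>" "sets \<sigma> = sets borel" "space \<sigma> = UNIV"
  using assms unfolding pos_meas_def by (auto dest: sets_eq_imp_space_eq)

lemma integrable_pos_meas:
  assumes "compact (UNIV :: 'a::metric_space set)" "pos_meas \<sigma>" "continuous_on UNIV (g :: 'a \<Rightarrow> real)"
  shows "integrable \<sigma> g"
  using pos_measD[OF assms(2)] by (intro integrable_continuous_compact_UNIV[OF assms(1)] assms(3))

lemma integrable_indicator_pos_meas:
  "pos_meas M \<Longrightarrow> A \<in> sets borel \<Longrightarrow> integrable M (indicator A :: 'a::topological_space \<Rightarrow> real)"
  unfolding pos_meas_def
  by (intro integrable_real_indicator) (auto simp: finite_measure.emeasure_finite less_top[symmetric])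

lemma abs_integral_diff_le:
  assumes "finite_measure M" "integrable M f" "integrable M g" "\<And>x. \<bar>f x - g x\<bar> \<le> e"
  shows "\<bar>integral\<^sup>L M f - integral\<^sup>L M g\<bar> \<le> e * measure M (space M)"
proof -
  have "\<bar>integral\<^sup>L M f - integral\<^sup>L M g\<bar> = \<bar>integral\<^sup>L M (\<lambda>x. f x - g x)\<bar>"
    using assms(2,3) by simp
  also have "\<dots> \<le> integral\<^sup>L M (\<lambda>x. \<bar>f x - g x\<bar>)" by (rule integral_abs_bound)
  also have "\<dots> \<le> integral\<^sup>L M (\<lambda>x. e)"
    using assms finite_measure.integrable_const[OF assms(1)] by (intro integral_mono) auto
  finally show ?thesis by (simp add: mult.commute)
qed

lemma continuous_in_fst_arg:
  assumes "continuous_on UNIV (\<lambda>(x, y). G x y)"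
  shows "continuous_on UNIV (\<lambda>x. G x y)"
proof -
  have "continuous_on UNIV ((\<lambda>(x, y). G x y) \<circ> (\<lambda>x. (x, y)))"
    by (rule continuous_on_compose) (auto intro: continuous_intros continuous_on_subset[OF assms])
  then show ?thesis by (simp add: comp_def)
qed

lemma continuous_in_snd_arg:
  assumes "continuous_on UNIV (\<lambda>(x, y). G x y)"
  shows "continuous_on UNIV (\<lambda>y. G x y)"
proof -
  have "continuous_on UNIV ((\<lambda>(x, y). G x y) \<circ> (\<lambda>y. (x, y)))"
    by (rule continuous_on_compose) (auto intro: continuous_intros continuous_on_subset[OF assms])
  then show ?thesis by (simp add: comp_def)
qed

lemma uniform_limit_continuous_sections:
  fixes G :: "'a::metric_space \<Rightarrow> 'b::metric_space \<Rightarrow> real"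
  assumes "compact (UNIV :: 'a set)" "compact (UNIV :: 'b set)"
    and Gc: "continuous_on UNIV (\<lambda>(x, y). G x y)" and y: "y \<longlonglongrightarrow> y0"
  shows "uniform_limit UNIV (\<lambda>n x. G x (y n)) (\<lambda>x. G x y0) sequentially"
proof (rule uniform_limitI)
  fix e :: real assume "e > 0"
  have "compact (UNIV :: ('a \<times> 'b) set)" using compact_Times[OF assms(1,2)] by simp
  then have "uniformly_continuous_on UNIV (\<lambda>(x, y). G x y)" by (rule compact_uniformly_continuous[OF Gc])
  then obtain d where d: "d > 0" "\<And>z z'. dist z' z < d \<Longrightarrow> dist (case_prod G z') (case_prod G z) < e"
    using \<open>e > 0\<close> unfolding uniformly_continuous_on_def by blast
  have "\<forall>\<^sub>F n in sequentially. dist (y n) y0 < d" using tendstoD[OF y d(1)] .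
  then show "\<forall>\<^sub>F n in sequentially. \<forall>x\<in>UNIV. dist (G x (y n)) (G x y0) < e"
  proof (rule eventually_mono)
    fix n assume "dist (y n) y0 < d"
    then have "dist (G x (y n)) (G x y0) < e" for x
      using d(2)[of "(x, y0)" "(x, y n)"] by (simp add: dist_Pair_Pair dist_commute)
    then show "\<forall>x\<in>UNIV. dist (G x (y n)) (G x y0) < e" by blast
  qed
qed

lemma tendsto_integral_uniform_weak:
  fixes g :: "nat \<Rightarrow> 'a::metric_space \<Rightarrow> real"
  assumes cpt: "compact (UNIV :: 'a set)"
    and pm: "\<And>n. pos_meas (\<sigma> n)" and mass: "\<And>n. measure (\<sigma> n) UNIV \<le> C"
    and weak: "\<And>f :: 'a \<Rightarrow> real. continuous_on UNIV f \<Longrightarrow> (\<lambda>n. integral\<^sup>L (\<sigma> n) f) \<longlonglongrightarrow> integral\<^sup>L \<sigma>0 f"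
    and gc: "\<And>n. continuous_on UNIV (g n)" and g0c: "continuous_on UNIV g0"
    and unif: "uniform_limit UNIV g g0 sequentially"
  shows "(\<lambda>n. integral\<^sup>L (\<sigma> n) (g n)) \<longlonglongrightarrow> integral\<^sup>L \<sigma>0 g0"
proof -
  have C: "0 \<le> C" using mass[of 0] measure_nonneg[of "\<sigma> 0" UNIV] by linarith
  have "(\<lambda>n. integral\<^sup>L (\<sigma> n) (g n) - integral\<^sup>L (\<sigma> n) g0) \<longlonglongrightarrow> 0"
  proof (rule tendstoI)
    fix r :: real assume r: "r > 0"
    then have "\<forall>\<^sub>F n in sequentially. \<forall>x\<in>UNIV. dist (g n x) (g0 x) < r / (C + 1)"
      using C by (intro uniform_limitD[OF unif]) simp
    then show "\<forall>\<^sub>F n in sequentially. dist (integral\<^sup>L (\<sigma> n) (g n) - integral\<^sup>L (\<sigma> n) g0) 0 < r"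
    proof (rule eventually_mono)
      fix n assume close: "\<forall>x\<in>UNIV. dist (g n x) (g0 x) < r / (C + 1)"
      have "\<bar>integral\<^sup>L (\<sigma> n) (g n) - integral\<^sup>L (\<sigma> n) g0\<bar> \<le> r / (C + 1) * measure (\<sigma> n) (space (\<sigma> n))"
        using close pos_measD[OF pm] integrable_pos_meas[OF cpt pm] gc g0c
        by (intro abs_integral_diff_le) (auto simp: dist_real_def less_imp_le)
      also have "\<dots> \<le> r / (C + 1) * C"
        using mass[of n] r C pos_measD(3)[OF pm] by (intro mult_left_mono) auto
      also have "\<dots> < r" using r C by (simp add: field_simps)
      finally show "dist (integral\<^sup>L (\<sigma> n) (g n) - integral\<^sup>L (\<sigma> n) g0) 0 < r" by simp
    qed
  qed
  from tendsto_add[OF this weak[OF g0c]] show ?thesis by simp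
qed

lemma continuous_on_parametric_integral:
  fixes G :: "'a::metric_space \<Rightarrow> 'b::metric_space \<Rightarrow> real"
  assumes cpt: "compact (UNIV :: 'a set)" "compact (UNIV :: 'b set)"
    and pm: "pos_meas \<sigma>" and Gc: "continuous_on UNIV (\<lambda>(x, y). G x y)"
  shows "continuous_on UNIV (\<lambda>y. integral\<^sup>L \<sigma> (\<lambda>x. G x y))"
proof (rule continuous_on_sequentiallyI)
  fix s :: "nat \<Rightarrow> 'b" and y0 assume "s \<longlonglongrightarrow> y0"
  show "(\<lambda>n. integral\<^sup>L \<sigma> (\<lambda>x. G x (s n))) \<longlonglongrightarrow> integral\<^sup>L \<sigma> (\<lambda>x. G x y0)"
    by (rule tendsto_integral_uniform_weak[OF cpt(1) pm order_refl])
      (auto intro: uniform_limit_continuous_sections[OF cpt Gc \<open>s \<longlonglongrightarrow> y0\<close>] continuous_in_fst_arg[OF Gc])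
qed

lemma weak_limit_measure_exists:
  fixes \<sigma> :: "nat \<Rightarrow> 'a::metric_space measure"
  assumes cpt: "compact (UNIV :: 'a set)" and pm: "\<And>n. pos_meas (\<sigma> n)"
    and conv: "\<And>g :: 'a \<Rightarrow> real. continuous_on UNIV g \<Longrightarrow> convergent (\<lambda>n. integral\<^sup>L (\<sigma> n) g)"
  obtains \<mu> where "pos_meas \<mu>"
    "\<And>g :: 'a \<Rightarrow> real. continuous_on UNIV g \<Longrightarrow> (\<lambda>n. integral\<^sup>L (\<sigma> n) g) \<longlonglongrightarrow> integral\<^sup>L \<mu> g"
proof -
  define \<Lambda> where "\<Lambda> g = lim (\<lambda>n. integral\<^sup>L (\<sigma> n) g)" for g :: "'a \<Rightarrow> real"
  have \<Lambda>: "(\<lambda>n. integral\<^sup>L (\<sigma> n) g) \<longlonglongrightarrow> \<Lambda> g" if "continuous_on UNIV g" for g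
    unfolding \<Lambda>_def using conv[OF that] by (simp add: convergent_LIMSEQ_iff)
  have int: "integrable (\<sigma> n) g" if "continuous_on UNIV g" for g :: "'a \<Rightarrow> real" and n
    by (rule integrable_pos_meas[OF cpt pm that])
  have \<Lambda>_add: "\<Lambda> (\<lambda>x. f x + g x) = \<Lambda> f + \<Lambda> g"
    if "continuous_on UNIV f" "continuous_on UNIV g" for f g :: "'a \<Rightarrow> real"
  proof -
    have "(\<lambda>n. integral\<^sup>L (\<sigma> n) (\<lambda>x. f x + g x)) \<longlonglongrightarrow> \<Lambda> (\<lambda>x. f x + g x)"
      by (rule \<Lambda>) (intro continuous_intros that)
    moreover have "(\<lambda>n. integral\<^sup>L (\<sigma> n) (\<lambda>x. f x + g x)) \<longlonglongrightarrow> \<Lambda> f + \<Lambda> g"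
      using tendsto_add[OF \<Lambda>[OF that(1)] \<Lambda>[OF that(2)]] int[OF that(1)] int[OF that(2)] by simp
    ultimately show ?thesis by (rule LIMSEQ_unique)
  qed
  have \<Lambda>_scale: "\<Lambda> (\<lambda>x. a * f x) = a * \<Lambda> f" if "continuous_on UNIV f" for f :: "'a \<Rightarrow> real" and a
  proof -
    have "(\<lambda>n. integral\<^sup>L (\<sigma> n) (\<lambda>x. a * f x)) \<longlonglongrightarrow> \<Lambda> (\<lambda>x. a * f x)"
      by (rule \<Lambda>) (intro continuous_intros that)
    moreover have "(\<lambda>n. integral\<^sup>L (\<sigma> n) (\<lambda>x. a * f x)) \<longlonglongrightarrow> a * \<Lambda> f"
      using tendsto_mult[OF tendsto_const \<Lambda>[OF that], of a] by simp
    ultimately show ?thesis by (rule LIMSEQ_unique)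
  qed
  have \<Lambda>_nonneg: "\<Lambda> f \<ge> 0" if "continuous_on UNIV f" "\<And>x. f x \<ge> 0" for f :: "'a \<Rightarrow> real"
    by (rule LIMSEQ_le_const[OF \<Lambda>[OF that(1)]]) (use that(2) in \<open>auto intro: integral_nonneg\<close>)
  obtain \<mu> where \<mu>: "finite_measure \<mu>" "sets \<mu> = sets borel"
    "\<And>g. continuous_on UNIV g \<Longrightarrow> integral\<^sup>L \<mu> g = \<Lambda> g"
    using riesz_representation_compact[where L = \<Lambda>, OF cpt \<Lambda>_add \<Lambda>_scale \<Lambda>_nonneg] by blast
  show ?thesis using that[of \<mu>] \<mu> \<Lambda> unfolding pos_meas_def by auto
qed

lemma measure_closed_eq_if_integrals_eq:
  fixes M1 M2 :: "'a::metric_space measure"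
  assumes pm: "pos_meas M1" "pos_meas M2"
    and eq: "\<And>g::'a \<Rightarrow> real. continuous_on UNIV g \<Longrightarrow> integral\<^sup>L M1 g = integral\<^sup>L M2 g"
    and F: "closed F" "F \<noteq> {}"
  shows "measure M1 F = measure M2 F"
proof -
  define s where "s n x = max 0 (1 - real n * infdist x F)" for n :: nat and x :: 'a
  have sc: "continuous_on UNIV (s n)" for n unfolding s_def by (intro continuous_intros continuous_on_infdist)
  have lim: "(\<lambda>n. s n x) \<longlonglongrightarrow> indicator F x" for x
  proof (cases "x \<in> F")
    case False
    then have d: "infdist x F > 0" using in_closed_iff_infdist_zero[OF F] infdist_nonneg[of x F] by auto
    obtain N :: nat where N: "1 / infdist x F \<le> real N" using real_arch_simple by blast
    have "s n x = 0" if "n \<ge> N" for n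
    proof -
      have "1 / infdist x F \<le> real n" using N that by linarith
      then show ?thesis using d unfolding s_def by (simp add: field_simps)
    qed
    then show ?thesis using False by (intro tendsto_eventually) (auto simp: eventually_sequentially)
  qed (simp add: s_def)
  have conv: "(\<lambda>n. integral\<^sup>L M (s n)) \<longlonglongrightarrow> measure M F" if "pos_meas M" for M
  proof -
    note M = pos_measD[OF that]
    have "(\<lambda>n. integral\<^sup>L M (s n)) \<longlonglongrightarrow> integral\<^sup>L M (indicator F :: 'a \<Rightarrow> real)"
    proof (rule integral_dominated_convergence[where w = "\<lambda>x. 1"])
      show "indicator F \<in> borel_measurable M"
        by (rule borel_measurable_indicator) (use F(1) M(2) in simp)
      show "s n \<in> borel_measurable M" for n by (rule measurable_continuous_sets_borel[OF sc M(2)])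
      show "AE x in M. norm (s n x) \<le> 1" for n by (simp add: s_def infdist_nonneg)
    qed (use lim finite_measure.integrable_const[OF M(1)] in auto)
    then show ?thesis using F M(2) by (simp add: sets_eq_imp_space_eq[of M borel])
  qed
  show ?thesis using LIMSEQ_unique[OF conv[OF pm(1)]] conv[OF pm(2)] eq[OF sc] by simp
qed

lemma pos_meas_eqI_integrals:
  fixes M1 M2 :: "'a::metric_space measure"
  assumes pm: "pos_meas M1" "pos_meas M2"
    and eq: "\<And>g::'a \<Rightarrow> real. continuous_on UNIV g \<Longrightarrow> integral\<^sup>L M1 g = integral\<^sup>L M2 g"
  shows "M1 = M2"
proof (rule measure_eqI_generator_eq[where E = "Collect closed" and \<Omega> = UNIV and A = "\<lambda>i. UNIV"])
  have "sets borel = sigma_sets UNIV (Collect closed)"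
    by (subst borel_eq_closed) (simp add: sets_measure_of)
  then show "sets M1 = sigma_sets UNIV (Collect closed)" "sets M2 = sigma_sets UNIV (Collect closed)"
    using pos_measD(2)[OF pm(1)] pos_measD(2)[OF pm(2)] by auto
  show "emeasure M1 UNIV \<noteq> \<infinity>"
    using finite_measure.emeasure_finite[OF pos_measD(1)[OF pm(1)], of UNIV] by simp
  fix X :: "'a set" assume "X \<in> Collect closed"
  then show "emeasure M1 X = emeasure M2 X"
    using measure_closed_eq_if_integrals_eq[OF pm eq, of X] pos_measD[OF pm(1)] pos_measD[OF pm(2)]
    by (cases "X = {}") (auto simp: finite_measure.emeasure_eq_measure)
qed (auto simp: Int_stable_def)

lemma emeasure_compact_disjoint_meas_supp:
  fixes \<sigma> :: "'a::metric_space measure"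
  assumes pm: "pos_meas \<sigma>" and K: "compact K" and disj: "K \<inter> meas_supp \<sigma> = {}"
  shows "emeasure \<sigma> K = 0"
proof -
  have "z \<notin> meas_supp \<sigma>" if "z \<in> K" for z using disj that by blast
  then have "\<forall>z\<in>K. \<exists>\<rho>>0. emeasure \<sigma> (ball z \<rho>) = 0"
    unfolding meas_supp_def by (auto simp: not_less)
  then obtain \<rho> where \<rho>: "\<And>z. z \<in> K \<Longrightarrow> \<rho> z > 0 \<and> emeasure \<sigma> (ball z (\<rho> z)) = 0"
    by metis
  obtain J where J: "J \<subseteq> K" "finite J" "K \<subseteq> (\<Union>z\<in>J. ball z (\<rho> z))"
    by (rule compactE_image[OF K, of K "\<lambda>z. ball z (\<rho> z)"]) (use \<rho> in force)+
  have "(\<Union>z\<in>J. ball z (\<rho> z)) \<in> null_sets \<sigma>"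
    using \<rho> J(1) pos_measD(2)[OF pm] by (intro null_sets.finite_UN[OF J(2)]) (auto simp: null_sets_def)
  moreover have "K \<in> sets \<sigma>" using compact_imp_closed[OF K] pos_measD(2)[OF pm] by simp
  ultimately have "K \<in> null_sets \<sigma>" using J(3) by (rule null_sets_subset)
  then show ?thesis by (simp add: null_sets_def)
qed

lemma integral_bump_bounds:
  fixes M :: "'a::metric_space measure"
  assumes cpt: "compact (UNIV :: 'a set)" and pm: "pos_meas M" and r: "r > 0"
  shows "measure M (ball x (r/4)) / 2 \<le> (\<integral>z. max 0 (1 - 2 * dist z x / r) \<partial>M)"
    and "(\<integral>z. max 0 (1 - 2 * dist z x / r) \<partial>M) \<le> measure M (cball x (r/2))"
proof -
  note M = pos_measD[OF pm]
  have int: "integrable M (\<lambda>z. max 0 (1 - 2 * dist z x / r))"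
    by (intro integrable_pos_meas[OF cpt pm] continuous_intros) (use r in auto)
  have "measure M (ball x (r/4)) / 2 = (\<integral>z. (1/2) * indicator (ball x (r/4)) z \<partial>M)"
    using M by simp
  also have "\<dots> \<le> (\<integral>z. max 0 (1 - 2 * dist z x / r) \<partial>M)"
  proof (rule integral_mono[OF _ int])
    show "integrable M (\<lambda>z. (1/2::real) * indicator (ball x (r/4)) z)"
      by (intro integrable_mult_right integrable_indicator_pos_meas[OF pm]) simp
    show "(1/2::real) * indicator (ball x (r/4)) z \<le> max 0 (1 - 2 * dist z x / r)" for z
      using r by (auto simp: indicator_def field_simps dist_commute)
  qed
  finally show "measure M (ball x (r/4)) / 2 \<le> (\<integral>z. max 0 (1 - 2 * dist z x / r) \<partial>M)" .
  have "(\<integral>z. max 0 (1 - 2 * dist z x / r) \<partial>M) \<le> (\<integral>z. indicator (cball x (r/2)) z \<partial>M)"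
    by (rule integral_mono[OF int integrable_indicator_pos_meas[OF pm]])
      (use r in \<open>auto simp: indicator_def field_simps dist_commute\<close>)
  also have "\<dots> = measure M (cball x (r/2))" using M by simp
  finally show "(\<integral>z. max 0 (1 - 2 * dist z x / r) \<partial>M) \<le> measure M (cball x (r/2))" .
qed

lemma not_in_meas_supp_weak_limit:
  fixes \<sigma> :: "nat \<Rightarrow> 'a::metric_space measure"
  assumes cpt: "compact (UNIV :: 'a set)"
    and pm: "\<And>n. pos_meas (\<sigma> n)" and pm0: "pos_meas \<mu>"
    and weak: "\<And>f :: 'a \<Rightarrow> real. continuous_on UNIV f \<Longrightarrow> (\<lambda>n. integral\<^sup>L (\<sigma> n) f) \<longlonglongrightarrow> integral\<^sup>L \<mu> f"
    and r: "r > 0" and away: "\<forall>\<^sub>F n in sequentially. ball x r \<inter> meas_supp (\<sigma> n) = {}"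
  shows "x \<notin> meas_supp \<mu>"
proof
  assume x: "x \<in> meas_supp \<mu>"
  let ?f = "\<lambda>z. max 0 (1 - 2 * dist z x / r)"
  have fc: "continuous_on UNIV ?f" by (intro continuous_intros) (use r in auto)
  have K: "compact (cball x (r/2))" using compact_Int_closed[OF cpt closed_cball, of x "r/2"] by simp
  have sub: "cball x (r/2) \<subseteq> ball x r" using r by (auto simp: subset_eq)
  have "\<forall>\<^sub>F n in sequentially. integral\<^sup>L (\<sigma> n) ?f \<le> 0"
    using away
  proof (rule eventually_mono)
    fix n assume "ball x r \<inter> meas_supp (\<sigma> n) = {}"
    then have "emeasure (\<sigma> n) (cball x (r/2)) = 0"
      using sub by (intro emeasure_compact_disjoint_meas_supp[OF pm K]) blast
    then show "integral\<^sup>L (\<sigma> n) ?f \<le> 0" using integral_bump_bounds(2)[OF cpt pm[of n] r, of x] by (simp add: measure_def)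
  qed
  then have "integral\<^sup>L \<mu> ?f \<le> 0" by (intro tendsto_upperbound[OF weak[OF fc]]) simp_all
  moreover have "emeasure \<mu> (ball x (r/4)) > 0" using x r unfolding meas_supp_def by simp
  then have "measure \<mu> (ball x (r/4)) > 0"
    using pos_measD(1)[OF pm0] by (simp add: finite_measure.emeasure_eq_measure)
  ultimately show False using integral_bump_bounds(1)[OF cpt pm0 r, of x] by simp
qed

text \<open>Near a point where \<open>p x \<noteq> 0\<close>, eventually all \<open>q n\<close> are nonzero.\<close>

lemma uniform_limit_zero_on_meas_supp:
  fixes \<sigma> :: "nat \<Rightarrow> 'a::metric_space measure" and q :: "nat \<Rightarrow> 'a \<Rightarrow> real"
  assumes cpt: "compact (UNIV :: 'a set)"
    and pm: "\<And>n. pos_meas (\<sigma> n)" and pm0: "pos_meas \<mu>"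
    and weak: "\<And>f :: 'a \<Rightarrow> real. continuous_on UNIV f \<Longrightarrow> (\<lambda>n. integral\<^sup>L (\<sigma> n) f) \<longlonglongrightarrow> integral\<^sup>L \<mu> f"
    and vanish: "\<And>n x. x \<in> meas_supp (\<sigma> n) \<Longrightarrow> q n x = 0"
    and pc: "continuous_on UNIV p" and unif: "uniform_limit UNIV q p sequentially"
    and x: "x \<in> meas_supp \<mu>"
  shows "p x = 0"
proof (rule ccontr)
  assume "p x \<noteq> 0"
  then have \<delta>: "\<bar>p x\<bar> / 2 > 0" by simp
  have "\<exists>d>0. \<forall>z\<in>UNIV. dist z x < d \<longrightarrow> dist (p z) (p x) < \<bar>p x\<bar> / 2"
    using pc \<delta> unfolding continuous_on_iff by blast
  then obtain r where r: "r > 0" "\<And>z. dist z x < r \<Longrightarrow> dist (p z) (p x) < \<bar>p x\<bar> / 2" by blast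
  have away: "\<forall>\<^sub>F n in sequentially. ball x r \<inter> meas_supp (\<sigma> n) = {}"
    using uniform_limitD[OF unif \<delta>]
  proof (rule eventually_mono)
    fix n assume close: "\<forall>z\<in>UNIV. dist (q n z) (p z) < \<bar>p x\<bar> / 2"
    have "q n z \<noteq> 0" if "z \<in> ball x r" for z
    proof -
      have "\<bar>p z - p x\<bar> < \<bar>p x\<bar> / 2" using r(2)[of z] that by (simp add: dist_real_def dist_commute)
      moreover have "\<bar>q n z - p z\<bar> < \<bar>p x\<bar> / 2" using close by (simp add: dist_real_def)
      ultimately show ?thesis by arith
    qed
    then show "ball x r \<inter> meas_supp (\<sigma> n) = {}" using vanish by blast
  qed
  have "x \<notin> meas_supp \<mu>"
    by (rule not_in_meas_supp_weak_limit[where \<sigma> = \<sigma>, OF cpt pm pm0 weak r(1) away])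
  then show False using x by simp
qed

lemma fin_coeff_diff: "fin_coeff a \<Longrightarrow> fin_coeff b \<Longrightarrow> fin_coeff (\<lambda>x. a x - b x)"
  unfolding fin_coeff_def csupp_def by (rule finite_subset[of _ "{x. a x \<noteq> 0} \<union> {x. b x \<noteq> 0}"]) auto

lemma fin_coeff_scale: "fin_coeff a \<Longrightarrow> fin_coeff (\<lambda>x. c * a x)"
  unfolding fin_coeff_def csupp_def by (rule finite_subset[of _ "{x. a x \<noteq> 0}"]) auto

lemma csupp_diff: "csupp (\<lambda>x. a x - b x) \<subseteq> csupp a \<union> csupp b"
  unfolding csupp_def by auto

lemma csupp_add: "csupp (\<lambda>x. a x + b x) \<subseteq> csupp a \<union> csupp b"
  unfolding csupp_def by auto

lemma csupp_scale: "csupp (\<lambda>x. c * a x) \<subseteq> csupp a"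
  unfolding csupp_def by auto

lemma sum_csupp_eq:
  assumes "finite S" "csupp a \<subseteq> S"
  shows "(\<Sum>x\<in>csupp a. a x * F x) = (\<Sum>x\<in>S. a x * F x)"
  by (rule sum.mono_neutral_left) (use assms in \<open>auto simp: csupp_def\<close>)

lemma kspan_eq_sum:
  assumes "finite S" "csupp a \<subseteq> S"
  shows "kspan k a y = (\<Sum>x\<in>S. a x * k x y)"
  unfolding kspan_def by (rule sum_csupp_eq[OF assms])

definition kernel_form :: "('a \<Rightarrow> 'a \<Rightarrow> real) \<Rightarrow> 'a set \<Rightarrow> ('a \<Rightarrow> real) \<Rightarrow> ('a \<Rightarrow> real) \<Rightarrow> real" where
  "kernel_form k S a b = (\<Sum>x\<in>S. \<Sum>y\<in>S. a x * b y * k x y)"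

lemma prenorm2_eq_kernel_form:
  assumes "finite S" "csupp a \<subseteq> S"
  shows "prenorm2 k a = kernel_form k S a a"
proof -
  have "prenorm2 k a = (\<Sum>x\<in>csupp a. a x * (\<Sum>y\<in>csupp a. a y * k x y))"
    unfolding prenorm2_def by (simp add: sum_distrib_left mult.assoc)
  also have "\<dots> = (\<Sum>x\<in>S. a x * (\<Sum>y\<in>S. a y * k x y))"
    using sum_csupp_eq[OF assms] by simp
  also have "\<dots> = kernel_form k S a a" unfolding kernel_form_def by (simp add: sum_distrib_left mult.assoc)
  finally show ?thesis .
qed

lemma kernel_form_add_left: "kernel_form k S (\<lambda>x. a x + b x) c = kernel_form k S a c + kernel_form k S b c"
  unfolding kernel_form_def by (simp add: sum.distrib[symmetric] algebra_simps)

lemma kernel_form_diff_left: "kernel_form k S (\<lambda>x. a x - b x) c = kernel_form k S a c - kernel_form k S b c"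
  unfolding kernel_form_def by (simp add: sum_subtractf[symmetric] algebra_simps)

lemma kernel_form_scale_left: "kernel_form k S (\<lambda>x. t * a x) c = t * kernel_form k S a c"
  unfolding kernel_form_def by (simp add: sum_distrib_left algebra_simps)

lemma kernel_form_add_right: "kernel_form k S c (\<lambda>x. a x + b x) = kernel_form k S c a + kernel_form k S c b"
  unfolding kernel_form_def by (simp add: sum.distrib[symmetric] algebra_simps)

lemma kernel_form_diff_right: "kernel_form k S c (\<lambda>x. a x - b x) = kernel_form k S c a - kernel_form k S c b"
  unfolding kernel_form_def by (simp add: sum_subtractf[symmetric] algebra_simps)

lemma kernel_form_scale_right: "kernel_form k S c (\<lambda>x. t * a x) = t * kernel_form k S c a"
  unfolding kernel_form_def by (simp add: sum_distrib_left algebra_simps)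

lemma kernel_form_commute: "(\<And>x y. k x y = k y x) \<Longrightarrow> kernel_form k S a b = kernel_form k S b a"
  unfolding kernel_form_def by (subst sum.swap) (simp add: algebra_simps)

lemma kernel_form_eq_sum_kspan:
  assumes "finite S" "csupp a \<subseteq> S" "csupp b \<subseteq> S"
  shows "kernel_form k S a b = (\<Sum>y\<in>csupp b. b y * kspan k a y)"
proof -
  have "kernel_form k S a b = (\<Sum>y\<in>S. b y * (\<Sum>x\<in>S. a x * k x y))"
    unfolding kernel_form_def by (subst sum.swap) (simp add: sum_distrib_left algebra_simps)
  also have "\<dots> = (\<Sum>y\<in>csupp b. b y * kspan k a y)"
    using kspan_eq_sum[OF assms(1,2)] sum_csupp_eq[OF assms(1,3)] by simp
  finally show ?thesis .
qed

lemma quadratic_nonneg_imp_abs_le: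
  fixes P I Q :: real
  assumes "\<And>t. 0 \<le> P - 2 * t * I + t^2 * Q" "0 \<le> P" "0 \<le> Q"
  shows "\<bar>I\<bar> \<le> sqrt P * sqrt Q"
proof -
  have "I^2 \<le> P * Q"
  proof (cases "Q = 0")
    case True
    have "I = 0"
    proof (rule ccontr)
      assume "I \<noteq> 0"
      then have "0 \<le> P - 2 * ((P + 1) / (2 * I)) * I" using assms(1)[of "(P + 1) / (2 * I)"] True by simp
      then show False using \<open>I \<noteq> 0\<close> by (simp add: field_simps)
    qed
    then show ?thesis using True by simp
  next
    case False
    then have Q: "Q > 0" using assms(3) by simp
    have "0 \<le> P - 2 * (I / Q) * I + (I / Q)^2 * Q" by (rule assms(1))
    also have "\<dots> = P - I^2 / Q" using Q by (simp add: field_simps power2_eq_square)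
    finally show ?thesis using Q by (simp add: field_simps)
  qed
  then have "sqrt (I^2) \<le> sqrt (P * Q)" by (rule real_sqrt_le_mono)
  then show ?thesis by (simp add: real_sqrt_mult)
qed

locale psd_kernel =
  fixes k :: "'a \<Rightarrow> 'a \<Rightarrow> real"
  assumes k_commute: "\<And>x y. k x y = k y x"
    and prenorm2_nonneg: "\<And>a. fin_coeff a \<Longrightarrow> 0 \<le> prenorm2 k a"
begin

abbreviation "pn a \<equiv> prenorm2 k a"

lemma kernel_form_cauchy_schwarz:
  assumes S: "finite S" "csupp a \<subseteq> S" "csupp b \<subseteq> S" and fa: "fin_coeff a" and fb: "fin_coeff b"
  shows "\<bar>kernel_form k S a b\<bar> \<le> sqrt (pn a) * sqrt (pn b)"
proof -
  have pa: "pn a = kernel_form k S a a" by (rule prenorm2_eq_kernel_form[OF S(1,2)])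
  have pb: "pn b = kernel_form k S b b" by (rule prenorm2_eq_kernel_form[OF S(1,3)])
  show ?thesis unfolding pa pb
  proof (rule quadratic_nonneg_imp_abs_le)
    fix t :: real
    have fc: "fin_coeff (\<lambda>x. a x - t * b x)" by (intro fin_coeff_diff fin_coeff_scale fa fb)
    have cs: "csupp (\<lambda>x. a x - t * b x) \<subseteq> S"
      using S csupp_diff[of a "\<lambda>x. t * b x"] csupp_scale[of t b] by blast
    have "0 \<le> pn (\<lambda>x. a x - t * b x)" by (rule prenorm2_nonneg[OF fc])
    also have "\<dots> = kernel_form k S (\<lambda>x. a x - t * b x) (\<lambda>x. a x - t * b x)"
      by (rule prenorm2_eq_kernel_form[OF S(1) cs])
    also have "\<dots> = kernel_form k S a a - 2 * t * kernel_form k S a b + t^2 * kernel_form k S b b"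
      unfolding kernel_form_diff_left kernel_form_diff_right kernel_form_scale_left kernel_form_scale_right
      using kernel_form_commute[of k S b a, OF k_commute] by (simp add: algebra_simps power2_eq_square)
    finally show "0 \<le> kernel_form k S a a - 2 * t * kernel_form k S a b + t^2 * kernel_form k S b b" .
  qed (use prenorm2_nonneg[OF fa] prenorm2_nonneg[OF fb] pa pb in auto)
qed

lemma sqrt_prenorm2_add_le:
  assumes fa: "fin_coeff a" and fb: "fin_coeff b"
  shows "sqrt (pn (\<lambda>x. a x + b x)) \<le> sqrt (pn a) + sqrt (pn b)"
proof -
  define S where "S = csupp a \<union> csupp b"
  have S: "finite S" "csupp a \<subseteq> S" "csupp b \<subseteq> S" "csupp (\<lambda>x. a x + b x) \<subseteq> S"
    using fa fb csupp_add[of a b] unfolding S_def fin_coeff_def by auto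
  have "pn (\<lambda>x. a x + b x) = kernel_form k S a a + 2 * kernel_form k S a b + kernel_form k S b b"
    unfolding prenorm2_eq_kernel_form[OF S(1) S(4)] kernel_form_add_left kernel_form_add_right
    using kernel_form_commute[of k S b a, OF k_commute] by simp
  also have "\<dots> \<le> pn a + 2 * (sqrt (pn a) * sqrt (pn b)) + pn b"
    using kernel_form_cauchy_schwarz[OF S(1-3) fa fb] prenorm2_eq_kernel_form[OF S(1) S(2)]
      prenorm2_eq_kernel_form[OF S(1) S(3)] by simp
  also have "\<dots> = (sqrt (pn a) + sqrt (pn b))^2"
    using prenorm2_nonneg[OF fa] prenorm2_nonneg[OF fb] by (simp add: power2_eq_square algebra_simps)
  finally have "sqrt (pn (\<lambda>x. a x + b x)) \<le> sqrt ((sqrt (pn a) + sqrt (pn b))^2)"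
    by (rule real_sqrt_le_mono)
  then show ?thesis using prenorm2_nonneg[OF fa] prenorm2_nonneg[OF fb] by simp
qed

lemma prenorm2_diff_commute: "pn (\<lambda>x. a x - b x) = pn (\<lambda>x. b x - a x)"
proof -
  have "csupp (\<lambda>x. a x - b x) = csupp (\<lambda>x. b x - a x)" unfolding csupp_def by auto
  then show ?thesis unfolding prenorm2_def by (simp add: algebra_simps)
qed

lemma abs_sqrt_prenorm2_diff_le:
  assumes fa: "fin_coeff a" and fb: "fin_coeff b"
  shows "\<bar>sqrt (pn a) - sqrt (pn b)\<bar> \<le> sqrt (pn (\<lambda>x. a x - b x))"
  using sqrt_prenorm2_add_le[OF fin_coeff_diff[OF fa fb] fb] sqrt_prenorm2_add_le[OF fin_coeff_diff[OF fb fa] fa]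
    prenorm2_diff_commute[of a b] by simp

text \<open>Cauchy-Schwarz against the point mass at \<open>y\<close>.\<close>

lemma abs_kspan_le:
  assumes fa: "fin_coeff a"
  shows "\<bar>kspan k a y\<bar> \<le> sqrt (pn a) * sqrt (k y y)"
proof -
  define d where "d = (\<lambda>x::'a. if x = y then (1::real) else 0)"
  define S where "S = csupp a \<union> {y}"
  have fd: "fin_coeff d" unfolding d_def fin_coeff_def csupp_def by simp
  have S: "finite S" "csupp a \<subseteq> S" "csupp d \<subseteq> S"
    using fa unfolding S_def fin_coeff_def d_def csupp_def by auto
  have yS: "y \<in> S" unfolding S_def by simp
  have inner: "(\<Sum>z\<in>S. c * d z * k x z) = c * k x y" for c x
  proof -
    have "(\<Sum>z\<in>S. c * d z * k x z) = (\<Sum>z\<in>S. if z = y then c * k x y else 0)"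
      by (rule sum.cong) (auto simp: d_def)
    then show ?thesis using S(1) yS by simp
  qed
  have "kspan k a y = kernel_form k S a d"
    unfolding kspan_eq_sum[OF S(1,2)] kernel_form_def inner ..
  moreover have "pn d = k y y"
  proof -
    have "pn d = (\<Sum>x\<in>S. if x = y then k y y else 0)"
      unfolding prenorm2_eq_kernel_form[OF S(1,3)] kernel_form_def inner by (rule sum.cong) (auto simp: d_def)
    then show ?thesis using S(1) yS by simp
  qed
  ultimately show ?thesis using kernel_form_cauchy_schwarz[OF S fa fd] by simp
qed

lemma kspan_diff: "fin_coeff a \<Longrightarrow> fin_coeff b \<Longrightarrow> kspan k (\<lambda>x. a x - b x) y = kspan k a y - kspan k b y"
proof -
  assume fa: "fin_coeff a" and fb: "fin_coeff b"
  define S where "S = csupp a \<union> csupp b"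
  have S: "finite S" "csupp a \<subseteq> S" "csupp b \<subseteq> S" "csupp (\<lambda>x. a x - b x) \<subseteq> S"
    using fa fb csupp_diff[of a b] unfolding S_def fin_coeff_def by auto
  show ?thesis unfolding kspan_eq_sum[OF S(1) S(2)] kspan_eq_sum[OF S(1) S(3)] kspan_eq_sum[OF S(1) S(4)]
    by (simp add: sum_subtractf[symmetric] algebra_simps)
qed

lemma rkhs_approxD:
  assumes "rkhs_approx k f a"
  shows "\<And>n. fin_coeff (a n)" "\<And>e. e > 0 \<Longrightarrow> \<exists>N. \<forall>m\<ge>N. \<forall>n\<ge>N. pn (\<lambda>x. a m x - a n x) < e"
    "\<And>y. (\<lambda>n. kspan k (a n) y) \<longlonglongrightarrow> f y"
  using assms unfolding rkhs_approx_def by auto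

lemma rkhs_approx_norm_convergent:
  assumes "rkhs_approx k f a"
  shows "convergent (\<lambda>n. sqrt (pn (a n)))"
proof -
  note A = rkhs_approxD[OF assms]
  have "Cauchy (\<lambda>n. sqrt (pn (a n)))"
  proof (rule metric_CauchyI)
    fix e :: real assume e: "e > 0"
    obtain N where N: "\<forall>m\<ge>N. \<forall>n\<ge>N. pn (\<lambda>x. a m x - a n x) < e^2" using A(2)[of "e^2"] e by auto
    have "dist (sqrt (pn (a m))) (sqrt (pn (a n))) < e" if "m \<ge> N" "n \<ge> N" for m n
    proof -
      have "pn (\<lambda>x. a m x - a n x) < e^2" using N that by auto
      then have "sqrt (pn (\<lambda>x. a m x - a n x)) < e" using real_sqrt_less_mono e by fastforce
      then show ?thesis
        using abs_sqrt_prenorm2_diff_le[OF A(1) A(1), of m n] e unfolding dist_real_def by simp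
    qed
    then show "\<exists>M. \<forall>m\<ge>M. \<forall>n\<ge>M. dist (sqrt (pn (a m))) (sqrt (pn (a n))) < e" by blast
  qed
  then show ?thesis by (simp add: Cauchy_convergent_iff)
qed

lemma rkhs_approx_diff:
  assumes A: "rkhs_approx k f a" and B: "rkhs_approx k g b"
  shows "rkhs_approx k (\<lambda>x. f x - g x) (\<lambda>n x. a n x - b n x)"
  unfolding rkhs_approx_def
proof (intro conjI allI impI)
  note A = rkhs_approxD[OF A] and B = rkhs_approxD[OF B]
  show "fin_coeff (\<lambda>x. a n x - b n x)" for n by (rule fin_coeff_diff[OF A(1) B(1)])
  show "(\<lambda>n. kspan k (\<lambda>x. a n x - b n x) y) \<longlonglongrightarrow> f y - g y" for y
    unfolding kspan_diff[OF A(1) B(1)] by (intro tendsto_diff A(3) B(3))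
  fix e :: real assume e: "e > 0"
  obtain N1 where N1: "\<forall>m\<ge>N1. \<forall>n\<ge>N1. pn (\<lambda>x. a m x - a n x) < e / 4" using A(2)[of "e/4"] e by auto
  obtain N2 where N2: "\<forall>m\<ge>N2. \<forall>n\<ge>N2. pn (\<lambda>x. b m x - b n x) < e / 4" using B(2)[of "e/4"] e by auto
  have "pn (\<lambda>x. (a m x - b m x) - (a n x - b n x)) < e" if mn: "m \<ge> max N1 N2" "n \<ge> max N1 N2" for m n
  proof -
    have eq: "(\<lambda>x. (a m x - b m x) - (a n x - b n x)) = (\<lambda>x. (a m x - a n x) + (b n x - b m x))"
      by (auto simp: algebra_simps)
    have s4: "sqrt (e/4) = sqrt e / 2" by (simp add: real_sqrt_divide)
    have "sqrt (pn (\<lambda>x. a m x - a n x)) < sqrt (e/4)" "sqrt (pn (\<lambda>x. b n x - b m x)) < sqrt (e/4)"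
      using N1 N2 mn by (simp_all add: real_sqrt_less_iff)
    then have "sqrt (pn (\<lambda>x. a m x - a n x)) < sqrt e / 2" "sqrt (pn (\<lambda>x. b n x - b m x)) < sqrt e / 2"
      unfolding s4 .
    moreover have "sqrt (pn (\<lambda>x. (a m x - a n x) + (b n x - b m x)))
        \<le> sqrt (pn (\<lambda>x. a m x - a n x)) + sqrt (pn (\<lambda>x. b n x - b m x))"
      by (rule sqrt_prenorm2_add_le[OF fin_coeff_diff[OF A(1) A(1)] fin_coeff_diff[OF B(1) B(1)]])
    ultimately have "sqrt (pn (\<lambda>x. (a m x - b m x) - (a n x - b n x))) < sqrt e" unfolding eq by linarith
    then show ?thesis by (simp add: real_sqrt_less_iff)
  qed
  then show "\<exists>N. \<forall>m\<ge>N. \<forall>n\<ge>N. pn (\<lambda>x. (a m x - b m x) - (a n x - b n x)) < e" by blast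
qed

text \<open>Split
  \<open>pn (d n) = \<langle>d n, d n - d m\<rangle> + \<langle>d n, d m\<rangle>\<close>: the first term is small by Cauchy-Schwarz, the
  second is a finite combination of values of \<open>kspan k (d n)\<close>, which tend to \<open>0\<close>.\<close>

lemma rkhs_approx_zero_prenorm2_tendsto:
  assumes A: "rkhs_approx k (\<lambda>x. 0) d"
  shows "(\<lambda>n. pn (d n)) \<longlonglongrightarrow> 0"
proof (rule tendstoI)
  note D = rkhs_approxD[OF A]
  obtain B where B: "B > 0" "\<And>n. norm (sqrt (pn (d n))) \<le> B"
    using convergent_imp_Bseq[OF rkhs_approx_norm_convergent[OF A]] unfolding Bseq_def by auto
  fix e :: real assume e: "e > 0"
  define del where "del = e / (2 * B)"
  have del: "del > 0" unfolding del_def using e B by simp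
  obtain m where m: "\<forall>n\<ge>m. pn (\<lambda>x. d n x - d m x) < del^2" using D(2)[of "del^2"] del by auto
  have "(\<lambda>n. \<Sum>y\<in>csupp (d m). d m y * kspan k (d n) y) \<longlonglongrightarrow> (\<Sum>y\<in>csupp (d m). d m y * 0)"
    by (intro tendsto_sum tendsto_mult tendsto_const D(3))
  then obtain N2 where N2: "\<forall>n\<ge>N2. \<bar>\<Sum>y\<in>csupp (d m). d m y * kspan k (d n) y\<bar> < e / 2"
    using LIMSEQ_D[of _ 0 "e/2"] e by fastforce
  have "\<bar>pn (d n)\<bar> < e" if n: "n \<ge> max m N2" for n
  proof -
    define S where "S = csupp (d n) \<union> csupp (d m)"
    have S: "finite S" "csupp (d n) \<subseteq> S" "csupp (d m) \<subseteq> S" "csupp (\<lambda>x. d n x - d m x) \<subseteq> S"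
      using D(1)[of n] D(1)[of m] csupp_diff[of "d n" "d m"] unfolding S_def fin_coeff_def by auto
    have "pn (d n) = kernel_form k S (d n) (\<lambda>x. d n x - d m x) + kernel_form k S (d n) (d m)"
      unfolding prenorm2_eq_kernel_form[OF S(1,2)] kernel_form_diff_right by simp
    moreover have "\<bar>kernel_form k S (d n) (\<lambda>x. d n x - d m x)\<bar> \<le> B * del"
    proof -
      have "sqrt (pn (\<lambda>x. d n x - d m x)) \<le> del"
        using m n del real_sqrt_less_mono[of _ "del^2"] by (simp add: less_imp_le)
      then have "sqrt (pn (d n)) * sqrt (pn (\<lambda>x. d n x - d m x)) \<le> B * del"
        using B(2)[of n] B(1) prenorm2_nonneg[OF fin_coeff_diff[OF D(1) D(1)]] by (intro mult_mono) auto
      then show ?thesis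
        using kernel_form_cauchy_schwarz[OF S(1,2,4) D(1) fin_coeff_diff[OF D(1) D(1)]] by linarith
    qed
    moreover have "\<bar>kernel_form k S (d n) (d m)\<bar> < e / 2"
      using kernel_form_eq_sum_kspan[OF S(1-3)] N2 n by auto
    moreover have "B * del = e / 2" unfolding del_def using B by simp
    ultimately show ?thesis by linarith
  qed
  then show "\<forall>\<^sub>F n in sequentially. dist (pn (d n)) 0 < e"
    unfolding eventually_sequentially dist_real_def by (intro exI[of _ "max m N2"]) simp
qed

lemma rkhs_approx_same_limit:
  assumes A: "rkhs_approx k f a" and B: "rkhs_approx k f b"
  shows "(\<lambda>n. sqrt (pn (a n)) - sqrt (pn (b n))) \<longlonglongrightarrow> 0"
proof (rule Lim_null_comparison)
  have "rkhs_approx k (\<lambda>x. 0) (\<lambda>n x. a n x - b n x)" using rkhs_approx_diff[OF A B] by simp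
  from tendsto_real_sqrt[OF rkhs_approx_zero_prenorm2_tendsto[OF this]]
  show "(\<lambda>n. sqrt (pn (\<lambda>x. a n x - b n x))) \<longlonglongrightarrow> 0" by simp
  show "\<forall>\<^sub>F n in sequentially. norm (sqrt (pn (a n)) - sqrt (pn (b n))) \<le> sqrt (pn (\<lambda>x. a n x - b n x))"
    using abs_sqrt_prenorm2_diff_le[OF rkhs_approxD(1)[OF A] rkhs_approxD(1)[OF B]] by simp
qed

lemma rkhs_approx_norm_tendsto:
  assumes A: "rkhs_approx k f a"
  shows "(\<lambda>n. sqrt (pn (a n))) \<longlonglongrightarrow> rkhs_norm k f"
proof -
  note fa = rkhs_approxD(1)[OF A]
  obtain s where s: "(\<lambda>n. sqrt (pn (a n))) \<longlonglongrightarrow> s"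
    using rkhs_approx_norm_convergent[OF A] unfolding convergent_def by blast
  have s0: "s \<ge> 0" by (rule LIMSEQ_le_const[OF s]) (use prenorm2_nonneg[OF fa] in auto)
  have uniq: "L = s^2" if B: "rkhs_approx k f b" "(\<lambda>n. pn (b n)) \<longlonglongrightarrow> L" for b L
  proof -
    have "(\<lambda>n. sqrt (pn (a n)) - (sqrt (pn (a n)) - sqrt (pn (b n)))) \<longlonglongrightarrow> s - 0"
      by (intro tendsto_diff s rkhs_approx_same_limit[OF A B(1)])
    moreover have "(\<lambda>n. sqrt (pn (b n))) \<longlonglongrightarrow> sqrt L" by (intro tendsto_real_sqrt B(2))
    ultimately have "s = sqrt L" using LIMSEQ_unique by fastforce
    moreover have "L \<ge> 0"
      by (rule LIMSEQ_le_const[OF B(2)]) (simp add: prenorm2_nonneg[OF rkhs_approxD(1)[OF B(1)]])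
    ultimately show ?thesis by simp
  qed
  have "(\<lambda>n. (sqrt (pn (a n)))^2) \<longlonglongrightarrow> s^2" by (intro tendsto_power s)
  then have "(\<lambda>n. pn (a n)) \<longlonglongrightarrow> s^2" using prenorm2_nonneg[OF fa] by simp
  then have "(THE L. \<exists>a. rkhs_approx k f a \<and> (\<lambda>n. pn (a n)) \<longlonglongrightarrow> L) = s^2"
    using A uniq by (intro the_equality) blast+
  then have "rkhs_norm k f = s" unfolding rkhs_norm_def using s0 by simp
  then show ?thesis using s by simp
qed

lemma abs_rkhs_le:
  assumes "f \<in> rkhs k"
  shows "\<bar>f y\<bar> \<le> rkhs_norm k f * sqrt (k y y)"
proof -
  obtain a where A: "rkhs_approx k f a" using assms unfolding rkhs_def by auto
  have "(\<lambda>n. \<bar>kspan k (a n) y\<bar>) \<longlonglongrightarrow> \<bar>f y\<bar>" by (intro tendsto_rabs rkhs_approxD(3)[OF A])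
  moreover have "(\<lambda>n. sqrt (pn (a n)) * sqrt (k y y)) \<longlonglongrightarrow> rkhs_norm k f * sqrt (k y y)"
    by (intro tendsto_mult tendsto_const rkhs_approx_norm_tendsto[OF A])
  ultimately show ?thesis using abs_kspan_le[OF rkhs_approxD(1)[OF A]] by (intro LIMSEQ_le) auto
qed

lemma rkhs_norm_nonneg: "f \<in> rkhs k \<Longrightarrow> 0 \<le> rkhs_norm k f"
  unfolding rkhs_def
  by (auto intro!: LIMSEQ_le_const[OF rkhs_approx_norm_tendsto] simp: rkhs_approx_def prenorm2_nonneg)

lemma rkhs_diff: "f \<in> rkhs k \<Longrightarrow> g \<in> rkhs k \<Longrightarrow> (\<lambda>x. f x - g x) \<in> rkhs k"
  unfolding rkhs_def using rkhs_approx_diff by blast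

lemma abs_rkhs_norm_diff_le:
  assumes "f \<in> rkhs k" "g \<in> rkhs k"
  shows "\<bar>rkhs_norm k f - rkhs_norm k g\<bar> \<le> rkhs_norm k (\<lambda>x. f x - g x)"
proof -
  obtain a b where A: "rkhs_approx k f a" and B: "rkhs_approx k g b" using assms unfolding rkhs_def by auto
  have "(\<lambda>n. \<bar>sqrt (pn (a n)) - sqrt (pn (b n))\<bar>) \<longlonglongrightarrow> \<bar>rkhs_norm k f - rkhs_norm k g\<bar>"
    by (intro tendsto_rabs tendsto_diff rkhs_approx_norm_tendsto A B)
  moreover have "(\<lambda>n. sqrt (pn (\<lambda>x. a n x - b n x))) \<longlonglongrightarrow> rkhs_norm k (\<lambda>x. f x - g x)"
    by (rule rkhs_approx_norm_tendsto[OF rkhs_approx_diff[OF A B]])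
  ultimately show ?thesis
    using abs_sqrt_prenorm2_diff_le[OF rkhs_approxD(1)[OF A] rkhs_approxD(1)[OF B]] by (intro LIMSEQ_le) auto
qed

end

locale entropic_kernel =
  fixes c :: "'a::metric_space \<Rightarrow> 'a \<Rightarrow> real" and eps :: real
  assumes compact_UNIV: "compact (UNIV :: 'a set)"
    and eps_pos: "eps > 0"
    and c_continuous: "continuous_on UNIV (\<lambda>(x, y). c x y)"
    and c_commute: "\<And>x y. c x y = c y x"
    and c_nonneg: "\<And>x y. c x y \<ge> 0"
    and pos_def: "pos_def_kernel (kc c eps)"
    and universal: "universal_kernel (kc c eps)"
begin

abbreviation "k \<equiv> kc c eps"

lemma k_continuous: "continuous_on UNIV (\<lambda>(x, y). k x y)"
proof -
  have "(\<lambda>(x, y). k x y) = (\<lambda>z. exp (- ((\<lambda>(x, y). c x y) z) / eps))" by (auto simp: kc_def)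
  moreover have "continuous_on UNIV (\<lambda>z. exp (- ((\<lambda>(x, y). c x y) z) / eps))"
    by (intro continuous_intros c_continuous) (use eps_pos in auto)
  ultimately show ?thesis by simp
qed

lemma k_diag_le_1: "k y y \<le> 1"
  unfolding kc_def using c_nonneg[of y y] eps_pos by simp

lemma k_lower_bound:
  obtains m where "m > 0" "\<And>x y. m \<le> k x y"
proof -
  have "compact (UNIV :: ('a \<times> 'a) set)" using compact_Times[OF compact_UNIV compact_UNIV] by simp
  then obtain z where "\<forall>w \<in> UNIV. (\<lambda>(x, y). k x y) z \<le> (\<lambda>(x, y). k x y) w"
    using continuous_attains_inf[OF _ _ k_continuous] by auto
  then show ?thesis using that[of "(\<lambda>(x, y). k x y) z"] by (cases z) (force simp: kc_def)
qed

sublocale psd_kernel k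
proof
  show "k x y = k y x" for x y unfolding kc_def using c_commute by simp
  show "0 \<le> prenorm2 k a" if "fin_coeff a" for a
    using pos_def that unfolding pos_def_kernel_def
    by (cases "a = (\<lambda>_. 0)") (auto simp: prenorm2_def csupp_def less_imp_le)
qed

lemma abs_rkhs_le_norm: "f \<in> rkhs k \<Longrightarrow> \<bar>f y\<bar> \<le> rkhs_norm k f"
  using abs_rkhs_le[of f y] rkhs_norm_nonneg[of f] k_diag_le_1[of y]
  by (smt (verit) mult_left_le real_sqrt_le_1_iff)

lemma kspan_continuous: "continuous_on UNIV (kspan k a)"
  unfolding kspan_def by (intro continuous_intros continuous_on_sum continuous_in_snd_arg[OF k_continuous])

lemma Hc_continuous: "pos_meas \<sigma> \<Longrightarrow> continuous_on UNIV (Hc k \<sigma>)"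
  unfolding Hc_def by (rule continuous_on_parametric_integral[OF compact_UNIV compact_UNIV _ k_continuous])

lemma integral_kspan:
  assumes pm: "pos_meas \<sigma>"
  shows "integral\<^sup>L \<sigma> (kspan k a) = (\<Sum>x\<in>csupp a. a x * Hc k \<sigma> x)"
proof -
  have "integrable \<sigma> (\<lambda>y. a x * k x y)" for x
    by (intro integrable_pos_meas[OF compact_UNIV pm] continuous_intros continuous_in_snd_arg[OF k_continuous])
  then have "integral\<^sup>L \<sigma> (kspan k a) = (\<Sum>x\<in>csupp a. integral\<^sup>L \<sigma> (\<lambda>y. a x * k x y))"
    unfolding kspan_def by (simp add: integral_sum)
  then show ?thesis unfolding Hc_def using k_commute by simp
qed

lemma integral_approx_kernel_sum:
  assumes gc: "continuous_on UNIV g" and e: "e > 0" and C: "C \<ge> 0"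
  obtains a where "\<And>\<sigma>. pos_meas \<sigma> \<Longrightarrow> measure \<sigma> UNIV \<le> C \<Longrightarrow>
    \<bar>integral\<^sup>L \<sigma> g - (\<Sum>x\<in>csupp a. a x * Hc k \<sigma> x)\<bar> \<le> e"
proof -
  have "e / (C + 1) > 0" using e C by simp
  then obtain a where a: "fin_coeff a" "\<And>y. \<bar>g y - kspan k a y\<bar> < e / (C + 1)"
    using universal gc unfolding universal_kernel_def by blast
  show ?thesis
  proof (rule that)
    fix \<sigma> :: "'a measure" assume \<sigma>: "pos_meas \<sigma>" "measure \<sigma> UNIV \<le> C"
    note M = pos_measD[OF \<sigma>(1)]
    have "\<bar>integral\<^sup>L \<sigma> g - integral\<^sup>L \<sigma> (kspan k a)\<bar> \<le> e / (C + 1) * measure \<sigma> (space \<sigma>)"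
      using less_imp_le[OF a(2)]
      by (intro abs_integral_diff_le M(1) integrable_pos_meas[OF compact_UNIV \<sigma>(1)] gc kspan_continuous)
    also have "\<dots> \<le> e / (C + 1) * (C + 1)" using \<sigma>(2) M(3) e C by (intro mult_left_mono) auto
    finally show "\<bar>integral\<^sup>L \<sigma> g - (\<Sum>x\<in>csupp a. a x * Hc k \<sigma> x)\<bar> \<le> e"
      using integral_kspan[OF \<sigma>(1)] C by simp
  qed
qed

lemma Hc_inj:
  assumes pm: "pos_meas \<sigma>1" "pos_meas \<sigma>2" and eq: "Hc k \<sigma>1 = Hc k \<sigma>2"
  shows "\<sigma>1 = \<sigma>2"
proof (rule pos_meas_eqI_integrals[OF pm])
  fix g :: "'a \<Rightarrow> real" assume gc: "continuous_on UNIV g"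
  define C where "C = max (measure \<sigma>1 UNIV) (measure \<sigma>2 UNIV)"
  have C: "C \<ge> 0" "measure \<sigma>1 UNIV \<le> C" "measure \<sigma>2 UNIV \<le> C"
    using measure_nonneg[of \<sigma>1 UNIV] unfolding C_def by (auto simp: le_max_iff_disj)
  have "\<bar>integral\<^sup>L \<sigma>1 g - integral\<^sup>L \<sigma>2 g\<bar> \<le> 0 + e" if "e > 0" for e
  proof -
    have "e / 2 > 0" using that by simp
    then obtain a where a: "\<And>\<sigma>. pos_meas \<sigma> \<Longrightarrow> measure \<sigma> UNIV \<le> C \<Longrightarrow>
        \<bar>integral\<^sup>L \<sigma> g - (\<Sum>x\<in>csupp a. a x * Hc k \<sigma> x)\<bar> \<le> e / 2"
      using integral_approx_kernel_sum[OF gc _ C(1)] by blast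
    show ?thesis using a[OF pm(1) C(2)] a[OF pm(2) C(3)] unfolding eq by linarith
  qed
  then have "\<bar>integral\<^sup>L \<sigma>1 g - integral\<^sup>L \<sigma>2 g\<bar> \<le> 0" by (rule field_le_epsilon)
  then show "integral\<^sup>L \<sigma>1 g = integral\<^sup>L \<sigma>2 g" by simp
qed

lemma Hc_inv_Hc: "pos_meas \<sigma> \<Longrightarrow> Hc_inv k (Hc k \<sigma>) = \<sigma>"
  unfolding Hc_inv_def by (rule the_equality) (auto intro: Hc_inj)

lemma convergent_integral_if_Hc_converges:
  fixes g :: "'a \<Rightarrow> real"
  assumes pm: "\<And>n. pos_meas (\<sigma> n)" and mass: "\<And>n. measure (\<sigma> n) UNIV \<le> C"
    and Hc: "\<And>y. (\<lambda>n. Hc k (\<sigma> n) y) \<longlonglongrightarrow> \<beta> y" and gc: "continuous_on UNIV g"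
  shows "convergent (\<lambda>n. integral\<^sup>L (\<sigma> n) g)"
proof (rule convergent_if_approx_convergent)
  fix e :: real assume "e > 0"
  have C: "C \<ge> 0" using mass[of 0] measure_nonneg[of "\<sigma> 0" UNIV] by linarith
  obtain a where a: "\<And>\<sigma>. pos_meas \<sigma> \<Longrightarrow> measure \<sigma> UNIV \<le> C \<Longrightarrow>
      \<bar>integral\<^sup>L \<sigma> g - (\<Sum>x\<in>csupp a. a x * Hc k \<sigma> x)\<bar> \<le> e"
    using integral_approx_kernel_sum[OF gc \<open>e > 0\<close> C] by blast
  have "(\<lambda>n. \<Sum>x\<in>csupp a. a x * Hc k (\<sigma> n) x) \<longlonglongrightarrow> (\<Sum>x\<in>csupp a. a x * \<beta> x)"
    by (intro tendsto_intros Hc)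
  then show "\<exists>t. convergent t \<and> (\<forall>n. \<bar>integral\<^sup>L (\<sigma> n) g - t n\<bar> \<le> e)"
    using a[OF pm mass] unfolding convergent_def by blast
qed

text \<open>By universality the limit functional exists, and by the Riesz theorem it is a measure.\<close>

lemma Hc_pointwise_limit_measure:
  assumes pm: "\<And>n. pos_meas (\<sigma> n)" and mass: "\<And>n. measure (\<sigma> n) UNIV \<le> C"
    and Hc: "\<And>y. (\<lambda>n. Hc k (\<sigma> n) y) \<longlonglongrightarrow> \<beta> y"
  obtains \<mu> where "pos_meas \<mu>" "Hc k \<mu> = \<beta>"
    "\<And>g :: 'a \<Rightarrow> real. continuous_on UNIV g \<Longrightarrow> (\<lambda>n. integral\<^sup>L (\<sigma> n) g) \<longlonglongrightarrow> integral\<^sup>L \<mu> g"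
proof -
  obtain \<mu> where \<mu>: "pos_meas \<mu>"
    and weak: "\<And>g :: 'a \<Rightarrow> real. continuous_on UNIV g \<Longrightarrow> (\<lambda>n. integral\<^sup>L (\<sigma> n) g) \<longlonglongrightarrow> integral\<^sup>L \<mu> g"
    using weak_limit_measure_exists[where \<sigma> = \<sigma>, OF compact_UNIV pm
        convergent_integral_if_Hc_converges[OF pm mass Hc]] by blast
  have "Hc k \<mu> y = \<beta> y" for y
  proof -
    have "(\<lambda>n. Hc k (\<sigma> n) y) \<longlonglongrightarrow> Hc k \<mu> y"
      unfolding Hc_def by (rule weak[OF continuous_in_fst_arg[OF k_continuous]])
    then show ?thesis using Hc LIMSEQ_unique by blast
  qed
  then have "Hc k \<mu> = \<beta>" by blast
  then show ?thesis by (rule that[OF \<mu> _ weak])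
qed

lemma BsetD:
  assumes "b \<in> Bset k"
  shows "pos_meas (Hc_inv k b)" "Hc k (Hc_inv k b) = b" "b \<in> rkhs k" "rkhs_norm k b = 1" "\<bar>b y\<bar> \<le> 1"
proof -
  obtain \<sigma> where "pos_meas \<sigma>" "b = Hc k \<sigma>" and r: "b \<in> rkhs k" "rkhs_norm k b = 1"
    using assms unfolding Bset_def by auto
  then show "pos_meas (Hc_inv k b)" "Hc k (Hc_inv k b) = b" "b \<in> rkhs k" "rkhs_norm k b = 1"
    using Hc_inv_Hc by auto
  show "\<bar>b y\<bar> \<le> 1" using abs_rkhs_le_norm[OF r(1), of y] r(2) by simp
qed

lemma Bset_mass_bound:
  obtains C where "\<And>b. b \<in> Bset k \<Longrightarrow> measure (Hc_inv k b) UNIV \<le> C"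
proof -
  obtain m where m: "m > 0" "\<And>x y. m \<le> k x y" using k_lower_bound by blast
  have "measure (Hc_inv k b) UNIV \<le> 1 / m" if b: "b \<in> Bset k" for b
  proof -
    let ?\<sigma> = "Hc_inv k b" and ?y = "undefined :: 'a"
    note M = pos_measD[OF BsetD(1)[OF b]]
    have "m * measure ?\<sigma> UNIV = integral\<^sup>L ?\<sigma> (\<lambda>x. m)" using M by simp
    also have "\<dots> \<le> integral\<^sup>L ?\<sigma> (\<lambda>x. k x ?y)"
      using m(2) finite_measure.integrable_const[OF M(1)]
        integrable_pos_meas[OF compact_UNIV BsetD(1)[OF b] continuous_in_fst_arg[OF k_continuous]]
      by (intro integral_mono) auto
    also have "\<dots> = b ?y" using BsetD(2)[OF b] unfolding Hc_def by metis
    also have "\<dots> \<le> 1" using BsetD(5)[OF b, of ?y] by simp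
    finally show ?thesis using m(1) by (simp add: field_simps)
  qed
  then show ?thesis by (rule that)
qed

lemma uniform_limit_rkhs_norm:
  assumes bs: "\<And>n. bs n \<in> rkhs k" and b: "b \<in> rkhs k"
    and lim: "(\<lambda>n. rkhs_norm k (\<lambda>x. bs n x - b x)) \<longlonglongrightarrow> 0"
  shows "uniform_limit UNIV bs b sequentially"
proof (rule uniform_limitI)
  fix e :: real assume "e > 0"
  with tendstoD[OF lim] have "\<forall>\<^sub>F n in sequentially. dist (rkhs_norm k (\<lambda>x. bs n x - b x)) 0 < e"
    by blast
  then show "\<forall>\<^sub>F n in sequentially. \<forall>x\<in>UNIV. dist (bs n x) (b x) < e"
  proof (rule eventually_mono)
    fix n assume "dist (rkhs_norm k (\<lambda>x. bs n x - b x)) 0 < e"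
    then have "rkhs_norm k (\<lambda>x. bs n x - b x) < e" by (simp add: dist_real_def abs_less_iff)
    then show "\<forall>x\<in>UNIV. dist (bs n x) (b x) < e"
      using abs_rkhs_le_norm[OF rkhs_diff[OF bs b]] by (auto simp: dist_real_def intro: le_less_trans)
  qed
qed

lemma V_k_continuous:
  assumes "continuous_on UNIV V"
  shows "continuous_on UNIV (\<lambda>(x, y). V x * k x y)"
proof -
  have "(\<lambda>(x, y). V x * k x y) = (\<lambda>z. V (fst z) * (\<lambda>(x, y). k x y) z)" by auto
  moreover have "continuous_on UNIV (\<lambda>z. V (fst z) * (\<lambda>(x, y). k x y) z)"
    by (intro continuous_intros continuous_on_compose2[OF assms] k_continuous) auto
  ultimately show ?thesis by simp
qed

lemma Wop_continuous:
  assumes "continuous_on UNIV V" "b \<in> Bset k"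
  shows "continuous_on UNIV (Wop eps k V b)"
proof -
  have "continuous_on UNIV b" using Hc_continuous[OF BsetD(1)[OF assms(2)]] BsetD(2)[OF assms(2)] by simp
  moreover have "continuous_on UNIV (Vstar k V b)"
    unfolding Vstar_def
    by (rule continuous_on_parametric_integral[OF compact_UNIV compact_UNIV BsetD(1)[OF assms(2)] V_k_continuous[OF assms(1)]])
  ultimately show ?thesis unfolding Wop_def by (intro continuous_intros assms(1)) auto
qed

text \<open>The measures \<open>Hc_inv k (bs n)\<close> converge weakly, the limit being identified by injectivity of
  \<open>Hc k\<close>; this handles the \<open>V\<^sup>*\<close> term.\<close>

lemma Wop_tendsto:
  assumes Vc: "continuous_on UNIV V"
    and bs: "\<And>n. bs n \<in> Bset k" and b: "b \<in> Bset k"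
    and unif: "uniform_limit UNIV bs b sequentially" and xs: "xs \<longlonglongrightarrow> l"
  shows "(\<lambda>n. Wop eps k V (bs n) (xs n)) \<longlonglongrightarrow> Wop eps k V b l"
proof -
  define \<sigma> where "\<sigma> n = Hc_inv k (bs n)" for n
  define \<sigma>0 where "\<sigma>0 = Hc_inv k b"
  obtain C where C: "\<And>b. b \<in> Bset k \<Longrightarrow> measure (Hc_inv k b) UNIV \<le> C" using Bset_mass_bound by blast
  have pm: "pos_meas (\<sigma> n)" "measure (\<sigma> n) UNIV \<le> C" for n
    unfolding \<sigma>_def using BsetD(1)[OF bs] C[OF bs] by auto
  have pm0: "pos_meas \<sigma>0" unfolding \<sigma>0_def by (rule BsetD(1)[OF b])
  have "(\<lambda>n. Hc k (\<sigma> n) y) \<longlonglongrightarrow> Hc k \<sigma>0 y" for y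
    unfolding \<sigma>_def \<sigma>0_def BsetD(2)[OF bs] BsetD(2)[OF b] by (rule tendsto_uniform_limitI[OF unif]) simp
  then obtain \<mu> where \<mu>: "pos_meas \<mu>" "Hc k \<mu> = Hc k \<sigma>0"
    and weak: "\<And>g :: 'a \<Rightarrow> real. continuous_on UNIV g \<Longrightarrow> (\<lambda>n. integral\<^sup>L (\<sigma> n) g) \<longlonglongrightarrow> integral\<^sup>L \<mu> g"
    using Hc_pointwise_limit_measure[where \<sigma> = \<sigma>, OF pm] by blast
  have "\<mu> = \<sigma>0" by (rule Hc_inj[OF \<mu>(1) pm0 \<mu>(2)])
  have lim_Vstar: "(\<lambda>n. Vstar k V (bs n) (xs n)) \<longlonglongrightarrow> Vstar k V b l"
    unfolding Vstar_def \<sigma>_def[symmetric] \<sigma>0_def[symmetric] \<open>\<mu> = \<sigma>0\<close>[symmetric]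
  proof (rule tendsto_integral_uniform_weak[where \<sigma> = \<sigma>, OF compact_UNIV pm weak])
    show "continuous_on UNIV (\<lambda>x. V x * k x (xs n))" for n
      by (rule continuous_in_fst_arg[OF V_k_continuous[OF Vc]])
    show "continuous_on UNIV (\<lambda>x. V x * k x l)"
      by (rule continuous_in_fst_arg[OF V_k_continuous[OF Vc]])
    show "uniform_limit UNIV (\<lambda>n x. V x * k x (xs n)) (\<lambda>x. V x * k x l) sequentially"
      by (rule uniform_limit_continuous_sections[OF compact_UNIV compact_UNIV V_k_continuous[OF Vc] xs])
  qed
  have lim_b: "(\<lambda>n. bs n (xs n)) \<longlonglongrightarrow> b l"
    using Hc_continuous[OF BsetD(1)[OF b]] BsetD(2)[OF b] by (intro uniform_limit_tendsto_compose[OF unif _ xs]) simp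
  have lim_V: "(\<lambda>n. V (xs n)) \<longlonglongrightarrow> V l" by (intro continuous_on_tendsto_compose[OF Vc xs]) auto
  show ?thesis unfolding Wop_def by (intro tendsto_mult tendsto_diff tendsto_const lim_Vstar lim_b lim_V)
qed

lemma Wop_diff_tendsto_subseq:
  assumes Vc: "continuous_on UNIV V" and bs: "\<And>n. bs n \<in> Bset k" and b: "b \<in> Bset k"
    and lim: "(\<lambda>n. rkhs_norm k (\<lambda>x. bs n x - b x)) \<longlonglongrightarrow> 0"
  obtains r where "(\<lambda>n. Wop eps k V (bs (r n)) (xs (r n)) - Wop eps k V b (xs (r n))) \<longlonglongrightarrow> 0"
proof -
  obtain r l where r: "strict_mono r" "(xs \<circ> r) \<longlonglongrightarrow> l"
    using compact_imp_seq_compact[OF compact_UNIV] unfolding seq_compact_def by blast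
  have unif: "uniform_limit UNIV (\<lambda>n. bs (r n)) b sequentially"
    using LIMSEQ_subseq_LIMSEQ[OF lim r(1)] BsetD(3)[OF bs] BsetD(3)[OF b]
    by (intro uniform_limit_rkhs_norm) (simp_all add: comp_def)
  have "(\<lambda>n. Wop eps k V (bs (r n)) (xs (r n))) \<longlonglongrightarrow> Wop eps k V b l"
    by (rule Wop_tendsto[OF Vc _ b unif]) (use bs r(2) in \<open>simp_all add: comp_def\<close>)
  moreover have "(\<lambda>n. Wop eps k V b (xs (r n))) \<longlonglongrightarrow> Wop eps k V b l"
    using r(2) by (intro continuous_on_tendsto_compose[OF Wop_continuous[OF Vc b]]) (auto simp: comp_def)
  ultimately have "(\<lambda>n. Wop eps k V (bs (r n)) (xs (r n)) - Wop eps k V b (xs (r n)))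
      \<longlonglongrightarrow> Wop eps k V b l - Wop eps k V b l"
    by (rule tendsto_diff)
  then show ?thesis using that by simp
qed

lemma Wop_uniformly_close:
  assumes Vc: "continuous_on UNIV V" and b: "b \<in> Bset k" and e: "e > 0"
  shows "\<exists>d>0. \<forall>b'\<in>Bset k. rkhs_norm k (\<lambda>x. b' x - b x) < d \<longrightarrow>
    (\<forall>x. \<bar>Wop eps k V b' x - Wop eps k V b x\<bar> < e)"
proof (rule ccontr)
  assume contra: "\<not> ?thesis"
  have "\<exists>b'. b' \<in> Bset k \<and> rkhs_norm k (\<lambda>x. b' x - b x) < inverse (real (Suc n)) \<and>
      (\<exists>x. e \<le> \<bar>Wop eps k V b' x - Wop eps k V b x\<bar>)" for n
  proof -
    have "inverse (real (Suc n)) > 0" by simp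
    with contra have "\<not> (\<forall>b'\<in>Bset k. rkhs_norm k (\<lambda>x. b' x - b x) < inverse (real (Suc n)) \<longrightarrow>
        (\<forall>x. \<bar>Wop eps k V b' x - Wop eps k V b x\<bar> < e))"
      by blast
    then show ?thesis by (auto simp: not_less)
  qed
  then have "\<forall>n. \<exists>b'. b' \<in> Bset k \<and> rkhs_norm k (\<lambda>x. b' x - b x) < inverse (real (Suc n)) \<and>
      (\<exists>x. e \<le> \<bar>Wop eps k V b' x - Wop eps k V b x\<bar>)"
    by blast
  from choice[OF this] obtain bs where bs0: "\<forall>n. bs n \<in> Bset k \<and>
      rkhs_norm k (\<lambda>x. bs n x - b x) < inverse (real (Suc n)) \<and>
      (\<exists>x. e \<le> \<bar>Wop eps k V (bs n) x - Wop eps k V b x\<bar>)"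
    by blast
  then have bs: "\<And>n. bs n \<in> Bset k" "\<And>n. rkhs_norm k (\<lambda>x. bs n x - b x) < inverse (real (Suc n))"
    by auto
  from bs0 have "\<forall>n. \<exists>x. e \<le> \<bar>Wop eps k V (bs n) x - Wop eps k V b x\<bar>" by blast
  from choice[OF this] obtain xs where xs: "\<And>n. e \<le> \<bar>Wop eps k V (bs n) (xs n) - Wop eps k V b (xs n)\<bar>"
    by blast
  have "(\<lambda>n. rkhs_norm k (\<lambda>x. bs n x - b x)) \<longlonglongrightarrow> 0"
  proof (rule Lim_null_comparison[OF _ LIMSEQ_inverse_real_of_nat])
    show "\<forall>\<^sub>F n in sequentially. norm (rkhs_norm k (\<lambda>x. bs n x - b x)) \<le> inverse (real (Suc n))"
      using bs(2) rkhs_norm_nonneg[OF rkhs_diff[OF BsetD(3)[OF bs(1)] BsetD(3)[OF b]]]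
      by (intro always_eventually allI) (simp add: less_imp_le)
  qed
  then obtain r where "(\<lambda>n. Wop eps k V (bs (r n)) (xs (r n)) - Wop eps k V b (xs (r n))) \<longlonglongrightarrow> 0"
    using Wop_diff_tendsto_subseq[where bs = bs and xs = xs, OF Vc bs(1) b] by blast
  from LIMSEQ_D[OF this e] obtain N
    where "\<forall>n\<ge>N. norm (Wop eps k V (bs (r n)) (xs (r n)) - Wop eps k V b (xs (r n)) - 0) < e" ..
  then show False using xs[of "r N"] by auto
qed

lemma Bset_Ptilde_closed:
  assumes bs: "\<And>n. bs n \<in> Bset k" and ps: "\<And>n. ps n \<in> Ptilde k (bs n)"
    and b: "b \<in> rkhs k" and pc: "continuous_on UNIV p"
    and lim: "(\<lambda>n. rkhs_norm k (\<lambda>x. bs n x - b x)) \<longlonglongrightarrow> 0"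
    and unif: "uniform_limit UNIV ps p sequentially"
  shows "b \<in> Bset k" "p \<in> Ptilde k b"
proof -
  define \<sigma> where "\<sigma> n = Hc_inv k (bs n)" for n
  obtain C where C: "\<And>b. b \<in> Bset k \<Longrightarrow> measure (Hc_inv k b) UNIV \<le> C" using Bset_mass_bound by blast
  have pm: "pos_meas (\<sigma> n)" "measure (\<sigma> n) UNIV \<le> C" for n
    unfolding \<sigma>_def using BsetD(1)[OF bs] C[OF bs] by auto
  have "(\<lambda>n. Hc k (\<sigma> n) y) \<longlonglongrightarrow> b y" for y
    unfolding \<sigma>_def BsetD(2)[OF bs]
    by (rule tendsto_uniform_limitI[OF uniform_limit_rkhs_norm[OF BsetD(3)[OF bs] b lim]]) simp
  then obtain \<mu> where \<mu>: "pos_meas \<mu>" "Hc k \<mu> = b"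
    and weak: "\<And>g :: 'a \<Rightarrow> real. continuous_on UNIV g \<Longrightarrow> (\<lambda>n. integral\<^sup>L (\<sigma> n) g) \<longlonglongrightarrow> integral\<^sup>L \<mu> g"
    using Hc_pointwise_limit_measure[where \<sigma> = \<sigma>, OF pm] by blast
  have "(\<lambda>n. rkhs_norm k (bs n) - rkhs_norm k b) \<longlonglongrightarrow> 0"
    by (rule Lim_null_comparison[OF _ lim]) (simp add: abs_rkhs_norm_diff_le[OF BsetD(3)[OF bs] b])
  then have "rkhs_norm k b = 1" using BsetD(4)[OF bs] by (simp add: LIMSEQ_const_iff)
  then show bB: "b \<in> Bset k" unfolding Bset_def using \<mu> b by auto
  have inv: "Hc_inv k b = \<mu>" using Hc_inv_Hc[OF \<mu>(1)] \<mu>(2) by simp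
  have pneg: "p x \<le> 0" for x
    by (rule LIMSEQ_le_const2[OF tendsto_uniform_limitI[OF unif]]) (use ps in \<open>auto simp: Ptilde_def\<close>)
  have vanish: "\<And>n x. x \<in> meas_supp (\<sigma> n) \<Longrightarrow> ps n x = 0" using ps unfolding Ptilde_def \<sigma>_def by blast
  have "p x = 0" if "x \<in> meas_supp \<mu>" for x
    by (rule uniform_limit_zero_on_meas_supp[where \<sigma> = \<sigma>, OF compact_UNIV pm(1) \<mu>(1) weak vanish pc unif that])
  then show "p \<in> Ptilde k b" unfolding Ptilde_def inv using pc pneg by auto
qed

end

theorem mainTheorem9:
  fixes c :: "'a::metric_space \<Rightarrow> 'a \<Rightarrow> real" and eps :: real and V :: "'a \<Rightarrow> real"
  assumes "compact (UNIV :: 'a set)"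
    and "eps > 0"
    and "continuous_on UNIV (\<lambda>(x, y). c x y)"
    and "\<And>x y. c x y = c y x"
    and "\<And>x y. c x y \<ge> 0"
    and "pos_def_kernel (kc c eps)"
    and "universal_kernel (kc c eps)"
    and "continuous_on UNIV V"
  shows "(\<forall>b\<in>Bset (kc c eps). continuous_on UNIV (Wop eps (kc c eps) V b))
    \<and> (\<forall>b\<in>Bset (kc c eps). \<forall>e>0. \<exists>d>0. \<forall>b'\<in>Bset (kc c eps).
          rkhs_norm (kc c eps) (\<lambda>x. b' x - b x) < d \<longrightarrow>
          (\<forall>x. \<bar>Wop eps (kc c eps) V b' x - Wop eps (kc c eps) V b x\<bar> < e))
    \<and> (\<forall>bs ps b p. (\<forall>n. bs n \<in> Bset (kc c eps) \<and> ps n \<in> Ptilde (kc c eps) (bs n))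
          \<longrightarrow> b \<in> rkhs (kc c eps) \<longrightarrow> continuous_on UNIV p
          \<longrightarrow> (\<lambda>n. rkhs_norm (kc c eps) (\<lambda>x. bs n x - b x)) \<longlonglongrightarrow> 0
          \<longrightarrow> uniform_limit UNIV ps p sequentially
          \<longrightarrow> b \<in> Bset (kc c eps) \<and> p \<in> Ptilde (kc c eps) b)"
proof -
  interpret entropic_kernel c eps using assms(1-7) by unfold_locales
  show ?thesis
    by (intro conjI ballI allI impI Wop_continuous[OF assms(8)] Wop_uniformly_close[OF assms(8)])
      (auto intro: Bset_Ptilde_closed)
qed

end
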